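(* Let $I$ be a nontrivial real interval (nonempty and not a singleton). A standard function $F\colon I^*\to\mathbb{R}$ is preassociative and unarily quasi-range-idempotent, with $F_1$ and $F_2$ continuous and one-to-one in each argument, if and only if there exist a real interval $J$ of one of the forms $]-\infty,b[$, $]-\infty,b]$, $]a,\infty[$, $[a,\infty[$ or $\mathbb{R}$ (with $b\leqslant 0\leqslant a$), a continuous and strictly monotonic function $\varphi$ from $I$ onto $J$, and a continuous and strictly monotonic function $\psi\colon J\to\mathbb{R}$ such that $$F_n(x_1,\ldots,x_n)=\psi(\varphi(x_1)+\cdots+\varphi(x_n)),\qquad n\geqslant 1.$$ For such a function $F$, we have $\psi=F_1\circ\varphi^{-1}$ and $I$ is necessarily open at least on one end. Moreover, $\varphi$ can be chosen to be strictly increasing.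
   Context: $I^*=\bigcup_{n\geqslant 0}I^n$ is the set of finite tuples over $I$, $I^0=\{\varepsilon\}$ with $\varepsilon$ the empty tuple; $F(\mathbf{x},\mathbf{y})$ denotes $F$ applied to the concatenation, concatenation with $\varepsilon$ leaving tuples unchanged. $F_n=F|_{I^n}$, $F^{\flat}=F|_{I^*\setminus\{\varepsilon\}}$. $F$ is standard if $F(\mathbf{x})=F(\varepsilon)$ only for $\mathbf{x}=\varepsilon$. $F$ is preassociative if for all tuples $\mathbf{x},\mathbf{y},\mathbf{y}',\mathbf{z}$, $F(\mathbf{y})=F(\mathbf{y}')$ implies $F(\mathbf{x},\mathbf{y},\mathbf{z})=F(\mathbf{x},\mathbf{y}',\mathbf{z})$. $F$ is unarily quasi-range-idempotent if $\mathrm{ran}(F_1)=\mathrm{ran}(F^{\flat})$. *)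

theory Defs
  imports "HOL-Analysis.Analysis"
begin

text \<open>Tuples over I are represented by lists whose entries lie in I;
  the empty tuple is the empty list and concatenation is append.\<close>

definition tuples :: "'a set \<Rightarrow> 'a list set" where
  "tuples I = {xs. set xs \<subseteq> I}"

definition standard :: "'a set \<Rightarrow> ('a list \<Rightarrow> 'b) \<Rightarrow> bool" where
  "standard I F \<longleftrightarrow> (\<forall>xs \<in> tuples I. F xs = F [] \<longrightarrow> xs = [])"

definition preassociative :: "'a set \<Rightarrow> ('a list \<Rightarrow> 'b) \<Rightarrow> bool" where
  "preassociative I F \<longleftrightarrow>
     (\<forall>x \<in> tuples I. \<forall>y \<in> tuples I. \<forall>y' \<in> tuples I. \<forall>z \<in> tuples I.
        F y = F y' \<longrightarrow> F (x @ y @ z) = F (x @ y' @ z))"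

definition unarily_quasi_range_idempotent :: "'a set \<Rightarrow> ('a list \<Rightarrow> 'b) \<Rightarrow> bool" where
  "unarily_quasi_range_idempotent I F \<longleftrightarrow>
     (\<lambda>x. F [x]) ` I = F ` (tuples I - {[]})"

definition strictly_monotonic_on :: "'a::order set \<Rightarrow> ('a \<Rightarrow> 'b::order) \<Rightarrow> bool" where
  "strictly_monotonic_on S f \<longleftrightarrow> strict_mono_on S f \<or> strict_antimono_on S f"

end

theory Submission
  imports Defs
begin

text \<open>
  Preassociativity and unary quasi-range-idempotence let the binary part of \<open>F\<close> be reduced to
  the unary one: \<open>F [x, y] = F [x \<cdot> y]\<close> for an operation \<open>\<cdot>\<close> on \<open>I\<close> which is associative,
  continuous and cancellative, and then \<open>F (x\<^sub>1 \<dots> x\<^sub>n) = F [x\<^sub>1 \<cdot> \<dots> \<cdot> x\<^sub>n]\<close>. By Aczel's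
  theorem such an operation is conjugate to addition, \<open>\<Phi> (x \<cdot> y) = \<Phi> x + \<Phi> y\<close> for a continuous
  strictly increasing \<open>\<Phi>\<close>; its image \<open>J\<close> is an interval closed under addition, hence one of the
  listed half-lines or \<open>\<real>\<close>, and \<open>\<psi> = F\<^sub>1 \<circ> \<Phi>\<^sup>-\<^sup>1\<close>. As \<open>J\<close> is unbounded, \<open>I\<close> cannot be compact.

  For Aczel's theorem pick \<open>b\<close> with \<open>b < b \<cdot> b\<close> (reflecting \<open>I\<close> if there is none). The
  intermediate value theorem provides the rational powers \<open>b\<^sup>1\<^sup>+\<^sup>m\<^sup>/\<^sup>(\<^sup>n\<^sup>+\<^sup>1\<^sup>)\<close>, which are
  ordered like their exponents and accumulate only at \<open>b\<close>; counting them below \<open>x\<close> defines a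
  logarithm to base \<open>b\<close> on the elements above \<open>b\<close>, and translating by powers of \<open>b\<close> extends it
  to all of \<open>I\<close>.
\<close>

section \<open>Continuous injective functions on real intervals\<close>

lemma continuous_on_connected_ivt:
  fixes h :: "'a::topological_space \<Rightarrow> real"
  assumes "connected T" "continuous_on T h" "p \<in> T" "q \<in> T" "h p \<le> c" "c \<le> h q"
  shows "\<exists>t\<in>T. h t = c"
proof -
  have "connected (h ` T)" using connected_continuous_image assms(1,2) by blast
  then have "c \<in> h ` T"
    using connectedD_interval[of "h ` T" "h p" "h q" c] assms(3-6) by auto
  then show ?thesis by auto
qed

lemma continuous_inj_on_interval_strict_mono_or_antimono:
  fixes g :: "real \<Rightarrow> real"
  assumes S: "is_interval S" and cont: "continuous_on S g" and inj: "inj_on g S"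
  shows "strict_mono_on S g \<or> strict_antimono_on S g"
proof (rule ccontr)
  assume "\<not> ?thesis"
  then obtain a b c d where ab: "a \<in> S" "b \<in> S" "a < b" "\<not> g a < g b"
    and cd: "c \<in> S" "d \<in> S" "c < d" "\<not> g c > g d"
    unfolding monotone_on_def by auto
  \<comment> \<open>The increment \<open>g q - g p\<close> is continuous on the connected set of pairs \<open>p < q\<close>
    in \<open>S\<close>, takes both signs, and can never vanish.\<close>
  let ?T = "{p. fst p \<in> S \<and> snd p \<in> S \<and> fst p < snd p}"
  have "?T = (S \<times> S) \<inter> {p. inner ((1::real), (-1::real)) p < 0}"
    by (auto simp: inner_prod_def)
  then have "convex ?T"
    using S is_interval_convex_1 by (simp add: convex_Int convex_Times convex_halfspace_lt)
  then have conn: "connected ?T" by (rule convex_connected)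
  have incr: "continuous_on ?T (\<lambda>p. g (snd p) - g (fst p))"
    by (intro continuous_intros continuous_on_compose2[OF cont]) auto
  have "g b - g a \<le> 0" "0 \<le> g d - g c"
    using ab cd by auto
  then obtain t where t: "t \<in> ?T" "g (snd t) - g (fst t) = 0"
    using continuous_on_connected_ivt[OF conn incr, of "(a, b)" "(c, d)" 0] ab cd by auto
  then have "snd t = fst t" using inj unfolding inj_on_def by auto
  then show False using t by simp
qed

lemma mono_on_interval_image_eventually_greater:
  fixes g :: "real \<Rightarrow> real"
  assumes gS: "is_interval (g ` S)" and mono: "mono_on S g" and x: "x \<in> S" and a: "a < g x"
  shows "\<forall>\<^sub>F y in at x within S. a < g y"
proof (cases "\<exists>y\<in>S. g y \<le> a")
  case True
  then obtain y where "y \<in> S" "g y \<le> a" by blast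
  moreover have "g y \<le> (a + g x) / 2" "(a + g x) / 2 \<le> g x" using \<open>g y \<le> a\<close> a by auto
  ultimately have "(a + g x) / 2 \<in> g ` S" using gS x unfolding is_interval_1 by blast
  then obtain x1 where x1: "x1 \<in> S" "g x1 = (a + g x) / 2" by (metis imageE)
  have "x1 < x"
  proof (rule ccontr)
    assume "\<not> x1 < x"
    then have "g x \<le> g x1" using mono x x1 by (simp add: mono_onD)
    then show False using x1 a by simp
  qed
  then have "\<forall>\<^sub>F y in at x within S. y \<in> S \<and> x1 < y"
    using order_tendstoD(1)[OF tendsto_ident_at] by (auto simp: eventually_at_filter elim: eventually_mono)
  then show ?thesis by (rule eventually_mono) (use x1 a mono in \<open>auto dest: mono_onD\<close>)
qed (auto simp: eventually_at_filter not_le)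

lemma mono_on_interval_image_eventually_less:
  fixes g :: "real \<Rightarrow> real"
  assumes gS: "is_interval (g ` S)" and mono: "mono_on S g" and x: "x \<in> S" and a: "g x < a"
  shows "\<forall>\<^sub>F y in at x within S. g y < a"
proof (cases "\<exists>y\<in>S. a \<le> g y")
  case True
  then obtain y where "y \<in> S" "a \<le> g y" by blast
  moreover have "g x \<le> (a + g x) / 2" "(a + g x) / 2 \<le> g y" using \<open>a \<le> g y\<close> a by auto
  ultimately have "(a + g x) / 2 \<in> g ` S" using gS x unfolding is_interval_1 by blast
  then obtain x1 where x1: "x1 \<in> S" "g x1 = (a + g x) / 2" by (metis imageE)
  have "x < x1"
  proof (rule ccontr)
    assume "\<not> x < x1"
    then have "g x1 \<le> g x" using mono x x1 by (simp add: mono_onD)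
    then show False using x1 a by simp
  qed
  then have "\<forall>\<^sub>F y in at x within S. y \<in> S \<and> y < x1"
    using order_tendstoD(2)[OF tendsto_ident_at] by (auto simp: eventually_at_filter elim: eventually_mono)
  then show ?thesis by (rule eventually_mono) (use x1 a mono in \<open>auto dest: mono_onD\<close>)
qed (auto simp: eventually_at_filter not_le)

lemma continuous_on_mono_interval_image:
  fixes g :: "real \<Rightarrow> real"
  assumes "is_interval (g ` S)" "mono_on S g"
  shows "continuous_on S g"
  unfolding continuous_on_def
  using mono_on_interval_image_eventually_greater[OF assms] mono_on_interval_image_eventually_less[OF assms]
  by (blast intro: order_tendstoI)

lemma continuous_on_antimono_interval_image:
  fixes g :: "real \<Rightarrow> real"
  assumes gS: "is_interval (g ` S)" and anti: "antimono_on S g"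
  shows "continuous_on S g"
proof -
  have "(\<lambda>x. - g x) ` S = uminus ` g ` S" by auto
  then have "continuous_on S (\<lambda>x. - g x)"
    using continuous_on_mono_interval_image[of "\<lambda>x. - g x"] gS anti
    by (auto simp: monotone_on_def)
  then show ?thesis using continuous_on_minus by fastforce
qed

lemma strict_mono_on_inv_into:
  fixes g :: "'a::linorder \<Rightarrow> 'b::linorder"
  assumes "strict_mono_on S g"
  shows "strict_mono_on (g ` S) (inv_into S g)"
  using assms strict_mono_on_imp_inj_on[OF assms]
  by (auto intro!: strict_mono_onI simp: strict_mono_on_less)

lemma continuous_on_inv_into_interval:
  fixes g :: "real \<Rightarrow> real"
  assumes S: "is_interval S" and cont: "continuous_on S g" and inj: "inj_on g S"
  shows "continuous_on (g ` S) (inv_into S g)"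
proof -
  have gS: "is_interval (g ` S)"
    using S cont connected_continuous_image is_interval_connected_1 by blast
  have image: "inv_into S g ` g ` S = S" using inj by simp
  consider "strict_mono_on S g" | "strict_antimono_on S g"
    using continuous_inj_on_interval_strict_mono_or_antimono[OF S cont inj] by blast
  then show ?thesis
  proof cases
    case 1
    then have "mono_on (g ` S) (inv_into S g)"
      by (auto simp: monotone_on_def inv_into_f_f[OF inj] strict_mono_on_less_eq)
    then show ?thesis using continuous_on_mono_interval_image image S by simp
  next
    case 2
    then have "antimono_on (g ` S) (inv_into S g)"
      by (auto simp: monotone_on_def inv_into_f_f[OF inj]) (metis linorder_not_less order.strict_iff_order)
    then show ?thesis using continuous_on_antimono_interval_image image S by simp
  qed
qed

section \<open>Continuous cancellative semigroups on an interval\<close>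

text \<open>\<open>fpow f n x\<close> is the product of \<open>n + 1\<close> copies of \<open>x\<close>.\<close>

primrec fpow :: "(real \<Rightarrow> real \<Rightarrow> real) \<Rightarrow> nat \<Rightarrow> real \<Rightarrow> real" where
  "fpow f 0 x = x"
| "fpow f (Suc n) x = f x (fpow f n x)"

primrec mult_right_iter :: "(real \<Rightarrow> real \<Rightarrow> real) \<Rightarrow> real \<Rightarrow> nat \<Rightarrow> real \<Rightarrow> real" where
  "mult_right_iter f c 0 x = x"
| "mult_right_iter f c (Suc n) x = f (mult_right_iter f c n x) c"

locale cancellative_interval_semigroup =
  fixes I :: "real set" and f :: "real \<Rightarrow> real \<Rightarrow> real"
  assumes interval: "is_interval I"
    and nontrivial: "\<exists>x\<in>I. \<exists>y\<in>I. x \<noteq> y"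
    and closed: "x \<in> I \<Longrightarrow> y \<in> I \<Longrightarrow> f x y \<in> I"
    and continuous: "continuous_on (I \<times> I) (\<lambda>p. f (fst p) (snd p))"
    and assoc: "x \<in> I \<Longrightarrow> y \<in> I \<Longrightarrow> z \<in> I \<Longrightarrow> f (f x y) z = f x (f y z)"
    and inj_left: "x \<in> I \<Longrightarrow> inj_on (f x) I"
    and inj_right: "y \<in> I \<Longrightarrow> inj_on (\<lambda>x. f x y) I"
begin

lemma opposite: "cancellative_interval_semigroup I (\<lambda>x y. f y x)"
proof
  have "continuous_on (I \<times> I) (\<lambda>p. (\<lambda>q. f (fst q) (snd q)) (snd p, fst p))"
    by (rule continuous_on_compose2[OF continuous]) (auto intro!: continuous_intros)
  then show "continuous_on (I \<times> I) (\<lambda>p. f (snd p) (fst p))" by simp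
qed (use interval nontrivial closed assoc inj_left inj_right in auto)

lemma continuous_on_mult:
  assumes "continuous_on S g" "continuous_on S h" "g ` S \<subseteq> I" "h ` S \<subseteq> I"
  shows "continuous_on S (\<lambda>x. f (g x) (h x))"
  using continuous_on_compose2[OF continuous continuous_on_Pair[OF assms(1,2)]] assms(3,4)
  by auto

lemma continuous_on_mult_left: "x \<in> I \<Longrightarrow> continuous_on I (f x)"
  using continuous_on_mult[of I "\<lambda>_. x" "\<lambda>y. y"] by (auto intro: continuous_intros)

lemma continuous_on_mult_right: "y \<in> I \<Longrightarrow> continuous_on I (\<lambda>x. f x y)"
  using continuous_on_mult[of I "\<lambda>x. x" "\<lambda>_. y"] by (auto intro: continuous_intros)

lemma obtain_less_pair: obtains y1 y2 where "y1 \<in> I" "y2 \<in> I" "y1 < y2"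
  using nontrivial by (metis linorder_neq_iff)

lemma strict_mono_or_antimono_mult_left:
  "(\<forall>x\<in>I. strict_mono_on I (f x)) \<or> (\<forall>x\<in>I. strict_antimono_on I (f x))"
proof (rule ccontr)
  assume "\<not> ?thesis"
  then obtain x1 x2 where x: "x1 \<in> I" "x2 \<in> I"
    "\<not> strict_mono_on I (f x1)" "\<not> strict_antimono_on I (f x2)"
    by auto
  have dir: "strict_antimono_on I (f x1)" "strict_mono_on I (f x2)"
    using continuous_inj_on_interval_strict_mono_or_antimono[OF interval continuous_on_mult_left inj_left] x
    by blast+
  obtain y1 y2 where y: "y1 \<in> I" "y2 \<in> I" "y1 < y2" by (rule obtain_less_pair)
  \<comment> \<open>A change of direction would make \<open>x \<mapsto> f x y2 - f x y1\<close> vanish somewhere.\<close>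
  have "f x1 y2 - f x1 y1 \<le> 0" "0 \<le> f x2 y2 - f x2 y1"
    using dir y x unfolding monotone_on_def by (auto simp: less_imp_le)
  moreover have "continuous_on I (\<lambda>x. f x y2 - f x y1)"
    by (intro continuous_intros continuous_on_mult_right y)
  ultimately obtain t where "t \<in> I" "f t y2 - f t y1 = 0"
    using continuous_on_connected_ivt[of I "\<lambda>x. f x y2 - f x y1" x1 x2 0] x interval
    by (auto simp: is_interval_connected_1)
  then have "y2 = y1" using inj_left y unfolding inj_on_def by auto
  then show False using y by simp
qed

lemma strict_mono_on_mult_left: "x \<in> I \<Longrightarrow> strict_mono_on I (f x)"
proof -
  assume x: "x \<in> I"
  have "\<not> (\<forall>x\<in>I. strict_antimono_on I (f x))"
  proof
    assume anti: "\<forall>x\<in>I. strict_antimono_on I (f x)"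
    obtain y1 y2 where y: "y1 \<in> I" "y2 \<in> I" "y1 < y2" by (rule obtain_less_pair)
    \<comment> \<open>\<open>y \<mapsto> f x (f x y)\<close> composes two decreasing maps, \<open>y \<mapsto> f (f x x) y\<close> is one.\<close>
    have "f x y2 < f x y1" using anti x y unfolding monotone_on_def by auto
    then have "f x (f x y1) < f x (f x y2)" using anti x y closed unfolding monotone_on_def by auto
    moreover have "f (f x x) y2 < f (f x x) y1" using anti x y closed unfolding monotone_on_def by auto
    ultimately show False using assoc x y by simp
  qed
  then show ?thesis using strict_mono_or_antimono_mult_left x by blast
qed

lemma strict_mono_on_mult_right: "y \<in> I \<Longrightarrow> strict_mono_on I (\<lambda>x. f x y)"
proof -
  assume "y \<in> I"
  interpret opp: cancellative_interval_semigroup I "\<lambda>x y. f y x" by (rule opposite)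
  show ?thesis using opp.strict_mono_on_mult_left[OF \<open>y \<in> I\<close>] .
qed

lemma mult_left_less_iff: "x \<in> I \<Longrightarrow> y \<in> I \<Longrightarrow> z \<in> I \<Longrightarrow> f x y < f x z \<longleftrightarrow> y < z"
  using strict_mono_on_mult_left strict_mono_on_less by blast

lemma mult_right_less_iff: "x \<in> I \<Longrightarrow> y \<in> I \<Longrightarrow> z \<in> I \<Longrightarrow> f y x < f z x \<longleftrightarrow> y < z"
  using strict_mono_on_mult_right strict_mono_on_less by blast

lemma mult_left_le_iff: "x \<in> I \<Longrightarrow> y \<in> I \<Longrightarrow> z \<in> I \<Longrightarrow> f x y \<le> f x z \<longleftrightarrow> y \<le> z"
  using strict_mono_on_mult_left strict_mono_on_less_eq by blast

lemma mult_right_le_iff: "x \<in> I \<Longrightarrow> y \<in> I \<Longrightarrow> z \<in> I \<Longrightarrow> f y x \<le> f z x \<longleftrightarrow> y \<le> z"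
  using strict_mono_on_mult_right strict_mono_on_less_eq by blast

lemma mult_left_cancel: "x \<in> I \<Longrightarrow> y \<in> I \<Longrightarrow> z \<in> I \<Longrightarrow> f x y = f x z \<longleftrightarrow> y = z"
  using inj_left unfolding inj_on_def by blast

lemma mult_right_cancel: "x \<in> I \<Longrightarrow> y \<in> I \<Longrightarrow> z \<in> I \<Longrightarrow> f y x = f z x \<longleftrightarrow> y = z"
  using inj_right unfolding inj_on_def by blast

lemma fpow_in: "x \<in> I \<Longrightarrow> fpow f n x \<in> I"
  by (induction n) (auto intro: closed)

lemma mult_right_iter_in: "x \<in> I \<Longrightarrow> c \<in> I \<Longrightarrow> mult_right_iter f c n x \<in> I"
  by (induction n) (auto intro: closed)

lemma fpow_Suc_right: "x \<in> I \<Longrightarrow> fpow f (Suc n) x = f (fpow f n x) x"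
proof (induction n)
  case (Suc n)
  have "fpow f (Suc (Suc n)) x = f x (f (fpow f n x) x)" using Suc by simp
  also have "\<dots> = f (f x (fpow f n x)) x" using assoc Suc.prems fpow_in by simp
  finally show ?case by simp
qed simp

lemma mult_fpow_fpow: "x \<in> I \<Longrightarrow> f (fpow f m x) (fpow f n x) = fpow f (m + n + 1) x"
  by (induction m) (auto simp: assoc fpow_in)

lemma fpow_fpow: "x \<in> I \<Longrightarrow> fpow f n (fpow f m x) = fpow f (n * m + n + m) x"
proof (induction n)
  case (Suc n)
  have "fpow f (Suc n) (fpow f m x) = f (fpow f m x) (fpow f (n * m + n + m) x)" using Suc by simp
  also have "\<dots> = fpow f (m + (n * m + n + m) + 1) x" using mult_fpow_fpow Suc.prems by simp
  finally show ?case by (simp add: algebra_simps)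
qed simp

lemma strict_mono_on_fpow: "strict_mono_on I (fpow f n)"
proof (induction n)
  case (Suc n)
  show ?case
  proof (rule strict_mono_onI)
    fix x y assume xy: "x \<in> I" "y \<in> I" "x < y"
    have "f x (fpow f n x) < f y (fpow f n x)" using mult_right_less_iff xy fpow_in by simp
    also have "\<dots> < f y (fpow f n y)"
      using mult_left_less_iff xy fpow_in strict_mono_onD[OF Suc] by simp
    finally show "fpow f (Suc n) x < fpow f (Suc n) y" by simp
  qed
qed (simp add: strict_mono_on_def monotone_on_def)

lemma fpow_le_iff: "x \<in> I \<Longrightarrow> y \<in> I \<Longrightarrow> fpow f n x \<le> fpow f n y \<longleftrightarrow> x \<le> y"
  using strict_mono_on_fpow strict_mono_on_less_eq by blast

lemma fpow_cancel: "x \<in> I \<Longrightarrow> y \<in> I \<Longrightarrow> fpow f n x = fpow f n y \<longleftrightarrow> x = y"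
  using strict_mono_on_fpow strict_mono_on_eq by blast

lemma continuous_on_fpow: "continuous_on I (fpow f n)"
  by (induction n) (auto intro: continuous_on_mult continuous_on_id fpow_in)

lemma continuous_on_mult_right_iter: "c \<in> I \<Longrightarrow> continuous_on I (mult_right_iter f c n)"
  by (induction n) (auto intro: continuous_on_mult continuous_on_id continuous_on_const mult_right_iter_in)

lemma mult_right_iter_strict_mono:
  "c \<in> I \<Longrightarrow> x \<in> I \<Longrightarrow> y \<in> I \<Longrightarrow> x < y \<Longrightarrow> mult_right_iter f c n x < mult_right_iter f c n y"
  by (induction n) (auto simp: mult_right_less_iff mult_right_iter_in)

lemma mult_right_iter_Suc: "x \<in> I \<Longrightarrow> c \<in> I \<Longrightarrow> mult_right_iter f c (Suc k) x = f x (fpow f k c)"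
proof (induction k)
  case (Suc k)
  have "mult_right_iter f c (Suc (Suc k)) x = f (f x (fpow f k c)) c" using Suc by simp
  also have "\<dots> = f x (f (fpow f k c) c)" using assoc Suc.prems fpow_in by simp
  also have "\<dots> = f x (fpow f (Suc k) c)" using fpow_Suc_right Suc.prems by simp
  finally show ?case .
qed simp

lemma commute_fpow: "x \<in> I \<Longrightarrow> y \<in> I \<Longrightarrow> f x y = f y x \<Longrightarrow> f x (fpow f n y) = f (fpow f n y) x"
proof (induction n)
  case (Suc n)
  have P: "fpow f n y \<in> I" using fpow_in Suc by simp
  have "f x (fpow f (Suc n) y) = f (f x y) (fpow f n y)" using assoc Suc.prems(1,2) P by simp
  also have "\<dots> = f y (f x (fpow f n y))" using assoc Suc.prems P by simp
  also have "\<dots> = f (fpow f (Suc n) y) x" using assoc Suc Suc.prems(1,2) P by simp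
  finally show ?case .
qed simp

lemma fpow_commute_less: "x \<in> I \<Longrightarrow> y \<in> I \<Longrightarrow> f x y < f y x \<Longrightarrow> f (fpow f n x) y < f y (fpow f n x)"
proof (induction n)
  case (Suc n)
  have P: "fpow f n x \<in> I" using fpow_in Suc by simp
  have "f (fpow f (Suc n) x) y = f x (f (fpow f n x) y)" using assoc Suc.prems P by simp
  also have "\<dots> < f x (f y (fpow f n x))" using mult_left_less_iff Suc P closed by simp
  also have "\<dots> = f (f x y) (fpow f n x)" using assoc Suc.prems P by simp
  also have "\<dots> < f (f y x) (fpow f n x)" using mult_right_less_iff Suc P closed by simp
  also have "\<dots> = f y (fpow f (Suc n) x)" using assoc Suc.prems P by simp
  finally show ?case .
qed simp

lemma commute_of_commute_fpow:
  assumes "x \<in> I" "y \<in> I" "f (fpow f n x) y = f y (fpow f n x)"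
  shows "f x y = f y x"
proof -
  interpret opp: cancellative_interval_semigroup I "\<lambda>x y. f y x" by (rule opposite)
  have "fpow (\<lambda>x y. f y x) n x = fpow f n x"
    by (induction n) (use assms(1) fpow_Suc_right in auto)
  then show ?thesis
    using fpow_commute_less[of x y n] opp.fpow_commute_less[of x y n] assms
    by (metis linorder_neq_iff order_less_irrefl)
qed

lemma fpow_mult_commute:
  "x \<in> I \<Longrightarrow> y \<in> I \<Longrightarrow> f x y = f y x \<Longrightarrow> fpow f n (f x y) = f (fpow f n x) (fpow f n y)"
proof (induction n)
  case (Suc n)
  have P: "fpow f n x \<in> I" and Q: "fpow f n y \<in> I" using fpow_in Suc by auto
  have c: "f y (fpow f n x) = f (fpow f n x) y" using commute_fpow[of y x n] Suc by simp
  have "fpow f (Suc n) (f x y) = f (f x y) (f (fpow f n x) (fpow f n y))" using Suc by simp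
  also have "\<dots> = f x (f (f y (fpow f n x)) (fpow f n y))" using assoc Suc.prems(1,2) P Q closed by simp
  also have "\<dots> = f x (f (f (fpow f n x) y) (fpow f n y))" using c by simp
  also have "\<dots> = f (fpow f (Suc n) x) (fpow f (Suc n) y)" using assoc Suc.prems(1,2) P Q closed by simp
  finally show ?case .
qed simp

lemma idempotent_unique:
  assumes "e \<in> I" "f e e = e" "e' \<in> I" "f e' e' = e'"
  shows "e = e'"
proof -
  \<comment> \<open>An idempotent is a two-sided identity by cancellation.\<close>
  have "f e e' = e'" using assoc[of e e e'] mult_left_cancel[of e "f e e'" e'] closed assms by simp
  moreover have "f e e' = e" using assoc[of e e' e'] mult_right_cancel[of e' "f e e'" e] closed assms by simp
  ultimately show ?thesis by simp
qed

lemma less_mult_left: "b \<in> I \<Longrightarrow> b < f b b \<Longrightarrow> y \<in> I \<Longrightarrow> y < f b y"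
  using mult_left_less_iff[of b y "f b y"] mult_right_less_iff[of y b "f b b"]
  by (metis assoc closed linorder_not_less order_le_less_trans mult_left_le_iff)

lemma less_mult_right: "b \<in> I \<Longrightarrow> b < f b b \<Longrightarrow> y \<in> I \<Longrightarrow> y < f y b"
proof -
  interpret opp: cancellative_interval_semigroup I "\<lambda>x y. f y x" by (rule opposite)
  show "b \<in> I \<Longrightarrow> b < f b b \<Longrightarrow> y \<in> I \<Longrightarrow> y < f y b" by (rule opp.less_mult_left)
qed

lemma orbit_unbounded:
  assumes g: "continuous_on I g" "\<And>z. z \<in> I \<Longrightarrow> g z \<in> I \<and> z < g z"
    and X: "X 0 \<in> I" "\<And>k. X (Suc k) = g (X k)" and t: "t \<in> I"
  shows "\<exists>k. t < X k"
proof (rule ccontr)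
  \<comment> \<open>A bounded orbit would converge to a fixed point of \<open>g\<close>.\<close>
  assume "\<not> ?thesis"
  then have le: "\<And>k. X k \<le> t" by (simp add: not_less)
  have XI: "X k \<in> I" for k by (induction k) (use X g in auto)
  have inc: "incseq X" using XI g X by (intro incseq_SucI) (simp add: less_imp_le)
  have bdd: "bdd_above (range X)" using le by (intro bdd_aboveI[of _ t]) auto
  have lim: "X \<longlonglongrightarrow> (SUP k. X k)" using LIMSEQ_incseq_SUP[OF bdd inc] .
  define c where "c = (SUP k. X k)"
  have "X 0 \<le> c" unfolding c_def using cSUP_upper[of 0 UNIV X] bdd by simp
  moreover have "c \<le> t" unfolding c_def using le by (simp add: cSUP_least)
  ultimately have cI: "c \<in> I" using X(1) t interval unfolding is_interval_1 by blast
  have "(\<lambda>k. g (X k)) \<longlonglongrightarrow> g c"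
    using continuous_on_tendsto_compose[OF g(1) lim[folded c_def] cI] XI by simp
  moreover have "(\<lambda>k. g (X k)) \<longlonglongrightarrow> c"
    using LIMSEQ_Suc[OF lim[folded c_def]] X(2) by simp
  ultimately have "g c = c" using LIMSEQ_unique by blast
  then show False using g(2)[OF cI] by simp
qed

lemma Icc_subset: "a \<in> I \<Longrightarrow> c \<in> I \<Longrightarrow> {a..c} \<subseteq> I"
  using interval by (simp add: connected_contains_Icc is_interval_connected_1)

lemma tendsto_mult:
  assumes "X \<longlonglongrightarrow> x" "Y \<longlonglongrightarrow> y" "x \<in> I" "y \<in> I" "\<And>k. X k \<in> I" "\<And>k. Y k \<in> I"
  shows "(\<lambda>k. f (X k) (Y k)) \<longlonglongrightarrow> f x y"
  using continuous_on_tendsto_compose[OF continuous tendsto_Pair[OF assms(1,2)]] assms(3-6)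
  by auto

lemma incseq_bounded_converges:
  assumes "\<And>k. X k \<in> I" "incseq X" "\<And>k. X k \<le> t" "t \<in> I"
  shows "\<exists>c\<in>I. X \<longlonglongrightarrow> c \<and> (\<forall>k. X k \<le> c)"
proof -
  have bdd: "bdd_above (range X)" using assms by (intro bdd_aboveI[of _ t]) auto
  have up: "X k \<le> (SUP k. X k)" for k by (rule cSUP_upper[OF UNIV_I bdd])
  have "(SUP k. X k) \<le> t" using assms(3) by (simp add: cSUP_least)
  then have "(SUP k. X k) \<in> I"
    using up[of 0] assms(1)[of 0] assms(4) interval unfolding is_interval_1 by blast
  then show ?thesis using LIMSEQ_incseq_SUP[OF bdd assms(2)] up by blast
qed

lemma decseq_bounded_converges:
  assumes "\<And>k. X k \<in> I" "decseq X" "\<And>k. t \<le> X k" "t \<in> I"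
  shows "\<exists>c\<in>I. X \<longlonglongrightarrow> c \<and> t \<le> c \<and> (\<forall>k. c \<le> X k)"
proof -
  have bdd: "bdd_below (range X)" using assms by (intro bdd_belowI[of _ t]) auto
  have lo: "(INF k. X k) \<le> X k" for k by (rule cINF_lower[OF bdd UNIV_I])
  have le: "t \<le> (INF k. X k)" using assms(3) by (simp add: cINF_greatest)
  then have "(INF k. X k) \<in> I"
    using lo[of 0] assms(1)[of 0] assms(4) interval unfolding is_interval_1 by blast
  then show ?thesis using LIMSEQ_decseq_INF[OF bdd assms(2)] lo le by blast
qed

lemma recurrence_mult_right_cancel:
  assumes c: "c \<in> I" and L: "L \<in> I" and w: "\<And>n. w n \<in> I" "incseq w"
    and bounded: "\<And>n. w n \<le> t" "t \<in> I" and recurrence: "\<And>n. f c (w (Suc n)) = f L (w n)"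
  shows "c = L"
proof -
  obtain z where z: "z \<in> I" "w \<longlonglongrightarrow> z"
    using incseq_bounded_converges[of w t] w bounded by blast
  have "(\<lambda>n. f c (w (Suc n))) \<longlonglongrightarrow> f c z"
    using tendsto_mult[OF tendsto_const LIMSEQ_Suc[OF z(2)] c z(1)] c w by auto
  moreover have "(\<lambda>n. f c (w (Suc n))) \<longlonglongrightarrow> f L z"
    using tendsto_mult[OF tendsto_const z(2) L z(1)] L w recurrence by auto
  ultimately have "f c z = f L z" by (rule LIMSEQ_unique)
  then show ?thesis using mult_right_cancel z(1) c L by simp
qed

end

section \<open>The additive generator\<close>

lemma eq_zero_if_multiples_bounded:
  fixes t c :: real
  assumes "\<And>n::nat. \<bar>t\<bar> * real (n + 1) \<le> c"
  shows "t = 0"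
proof (rule ccontr)
  assume "t \<noteq> 0"
  then have t: "0 < \<bar>t\<bar>" by simp
  obtain n :: nat where "c / \<bar>t\<bar> < real n" using reals_Archimedean2 by blast
  then have "c < \<bar>t\<bar> * real (n + 1)" using t by (simp add: pos_divide_less_eq algebra_simps)
  then show False using assms[of n] by simp
qed

locale expanding_base = cancellative_interval_semigroup +
  fixes b :: real
  assumes base_in: "b \<in> I" and base_expanding: "b < f b b"
begin

lemma less_square_of_ge_base: "z \<in> I \<Longrightarrow> b \<le> z \<Longrightarrow> z < f z z"
proof -
  assume z: "z \<in> I" "b \<le> z"
  have "f b z \<le> f z z" using mult_right_le_iff z base_in by simp
  moreover have "z < f b z" using less_mult_left[OF base_in base_expanding z(1)] .
  ultimately show ?thesis by simp
qed

lemma less_mult_left_of_ge_base: "z \<in> I \<Longrightarrow> b \<le> z \<Longrightarrow> y \<in> I \<Longrightarrow> y < f z y"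
  using less_mult_left less_square_of_ge_base by blast

lemma mult_ge_base: "x \<in> I \<Longrightarrow> b \<le> x \<Longrightarrow> y \<in> I \<Longrightarrow> b \<le> y \<Longrightarrow> b \<le> f x y"
  using less_mult_left_of_ge_base[of x y] by simp

lemma fpow_base_less_Suc: "fpow f n b < fpow f (Suc n) b"
  using less_mult_left[OF base_in base_expanding fpow_in[OF base_in]] by simp

lemma fpow_base_strict_mono: "m < n \<Longrightarrow> fpow f m b < fpow f n b"
  using lift_Suc_mono_less[of "\<lambda>n. fpow f n b", OF fpow_base_less_Suc] by blast

lemma fpow_base_less_iff: "fpow f m b < fpow f n b \<longleftrightarrow> m < n"
  using fpow_base_strict_mono by (metis linorder_neq_iff order_less_asym)

lemma fpow_base_le_iff: "fpow f m b \<le> fpow f n b \<longleftrightarrow> m \<le> n"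
  using fpow_base_less_iff by (meson not_le)

lemma base_le_fpow_base: "b \<le> fpow f n b"
  using fpow_base_le_iff[of 0 n] by simp

lemma le_fpow_of_ge_base: "z \<in> I \<Longrightarrow> b \<le> z \<Longrightarrow> z \<le> fpow f n z"
proof (induction n)
  case 0 then show ?case by simp
next
  case (Suc n)
  have "fpow f n z < fpow f (Suc n) z" using less_mult_left_of_ge_base Suc.prems fpow_in by simp
  then show ?case using Suc by simp
qed

lemma fpow_base_unbounded: "t \<in> I \<Longrightarrow> \<exists>k. t < fpow f k b"
  by (rule orbit_unbounded[of "f b" "\<lambda>k. fpow f k b"])
     (auto simp: continuous_on_mult_left base_in closed less_mult_left[OF base_in base_expanding])

lemma mult_right_iter_unbounded: "x \<in> I \<Longrightarrow> t \<in> I \<Longrightarrow> \<exists>k. t < mult_right_iter f b k x"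
  by (rule orbit_unbounded[of "\<lambda>z. f z b" "\<lambda>k. mult_right_iter f b k x"])
     (auto simp: continuous_on_mult_right base_in closed less_mult_right[OF base_in base_expanding])

lemma exists_right_quotient:
  assumes a: "a \<in> I" "b \<le> a" and y: "y \<in> I" "f a b \<le> y"
  shows "\<exists>z\<in>I. b \<le> z \<and> f a z = y"
proof -
  have "b < f a b" using less_mult_left_of_ge_base[of a b] a base_in by simp
  then have hby: "b \<le> y" using y by simp
  have sub: "{b..y} \<subseteq> I" using Icc_subset base_in y(1) by blast
  have "y < f a y" using less_mult_left_of_ge_base a y by simp
  moreover have "continuous_on {b..y} (f a)" using continuous_on_mult_left[OF a(1)] sub continuous_on_subset by blast
  ultimately obtain z where z: "b \<le> z" "z \<le> y" "f a z = y"
    using IVT'[of "f a" b y y] y hby by auto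
  then show ?thesis using sub by auto
qed

lemma fpow_root_exists: "w \<in> I \<Longrightarrow> fpow f n b \<le> w \<Longrightarrow> \<exists>z\<in>I. b \<le> z \<and> fpow f n z = w"
proof -
  assume w: "w \<in> I" "fpow f n b \<le> w"
  have bw: "b \<le> w" using base_le_fpow_base[of n] w by simp
  have sub: "{b..w} \<subseteq> I" using Icc_subset base_in w(1) by blast
  have "w \<le> fpow f n w" using le_fpow_of_ge_base w bw by simp
  moreover have "continuous_on {b..w} (fpow f n)" using continuous_on_fpow sub continuous_on_subset by blast
  ultimately obtain z where "b \<le> z" "z \<le> w" "fpow f n z = w"
    using IVT'[of "fpow f n" b w w] w bw by auto
  then show ?thesis using sub by auto
qed

text \<open>\<open>rat_pow m n\<close> is the \<open>(n + 1)\<close>-th root of \<open>b\<^sup>n\<^sup>+\<^sup>1\<^sup>+\<^sup>m\<close>, i.e. \<open>b\<close> raised to the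
  rational exponent \<open>1 + m / (n + 1)\<close>.\<close>

definition rat_pow :: "nat \<Rightarrow> nat \<Rightarrow> real" where
  "rat_pow m n = (SOME z. z \<in> I \<and> b \<le> z \<and> fpow f n z = fpow f (n + m) b)"

lemma rat_pow: "rat_pow m n \<in> I" "b \<le> rat_pow m n" "fpow f n (rat_pow m n) = fpow f (n + m) b"
proof -
  have "\<exists>z. z \<in> I \<and> b \<le> z \<and> fpow f n z = fpow f (n + m) b"
    using fpow_root_exists[of "fpow f (n + m) b" n] fpow_in[OF base_in] fpow_base_le_iff[of n "n + m"]
    by auto
  then show "rat_pow m n \<in> I" "b \<le> rat_pow m n" "fpow f n (rat_pow m n) = fpow f (n + m) b"
    unfolding rat_pow_def by (metis (mono_tags, lifting) someI_ex)+
qed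

lemma rat_pow_unique: assumes "z \<in> I" "fpow f n z = fpow f (n + m) b" shows "rat_pow m n = z"
proof -
  have "fpow f n (rat_pow m n) = fpow f n z" using rat_pow(3) assms(2) by simp
  then show ?thesis using fpow_cancel rat_pow(1) assms(1) by blast
qed

lemma rat_pow_0: "rat_pow 0 n = b"
  using rat_pow_unique[of b n 0] base_in by simp

lemma rat_pow_fpow: "rat_pow ((n + 1) * k) n = fpow f k b"
proof (rule rat_pow_unique)
  show "fpow f k b \<in> I" using fpow_in base_in by simp
  have "fpow f n (fpow f k b) = fpow f (n * k + n + k) b" using fpow_fpow base_in by simp
  also have "n * k + n + k = n + (n + 1) * k" by simp
  finally show "fpow f n (fpow f k b) = fpow f (n + (n + 1) * k) b" .
qed

lemma commute_base_fpow_base: "f b (fpow f k b) = f (fpow f k b) b"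
  using commute_fpow[of b b k] base_in by simp

lemma rat_pow_commute_base: "f (rat_pow m n) b = f b (rat_pow m n)"
proof (rule commute_of_commute_fpow[of _ _ n])
  show "rat_pow m n \<in> I" "b \<in> I" using rat_pow base_in by auto
  show "f (fpow f n (rat_pow m n)) b = f b (fpow f n (rat_pow m n))" using commute_base_fpow_base rat_pow by simp
qed

lemma rat_pow_commute_fpow_base: "f (rat_pow m n) (fpow f k b) = f (fpow f k b) (rat_pow m n)"
  using commute_fpow[of "rat_pow m n" b k] rat_pow base_in rat_pow_commute_base by simp

lemma rat_pow_commute: "f (rat_pow m n) (rat_pow m' n') = f (rat_pow m' n') (rat_pow m n)"
proof (rule commute_of_commute_fpow[of _ _ n])
  show "rat_pow m n \<in> I" "rat_pow m' n' \<in> I" using rat_pow by auto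
  show "f (fpow f n (rat_pow m n)) (rat_pow m' n') = f (rat_pow m' n') (fpow f n (rat_pow m n))"
    using rat_pow_commute_fpow_base[of m' n' "n + m"] rat_pow by simp
qed

lemma fpow_rat_pow: "fpow f (n' * n + n' + n) (rat_pow m n) = fpow f (n' * (n + m) + n' + (n + m)) b"
proof -
  have "fpow f (n' * n + n' + n) (rat_pow m n) = fpow f n' (fpow f n (rat_pow m n))"
    using fpow_fpow[of "rat_pow m n" n' n] rat_pow(1) by simp
  also have "\<dots> = fpow f n' (fpow f (n + m) b)" using rat_pow by simp
  also have "\<dots> = fpow f (n' * (n + m) + n' + (n + m)) b" using fpow_fpow base_in by simp
  finally show ?thesis .
qed

lemma rat_pow_le_iff: "rat_pow m n \<le> rat_pow m' n' \<longleftrightarrow> m * (n' + 1) \<le> m' * (n + 1)"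
proof -
  \<comment> \<open>Compare both sides after raising them to the common exponent \<open>(n + 1) * (n' + 1)\<close>.\<close>
  have "rat_pow m n \<le> rat_pow m' n'
      \<longleftrightarrow> fpow f (n' * n + n' + n) (rat_pow m n) \<le> fpow f (n' * n + n' + n) (rat_pow m' n')"
    using fpow_le_iff rat_pow by simp
  also have "fpow f (n' * n + n' + n) (rat_pow m' n') = fpow f (n * n' + n + n') (rat_pow m' n')"
    by (simp add: algebra_simps)
  also have "fpow f (n' * n + n' + n) (rat_pow m n) \<le> fpow f (n * n' + n + n') (rat_pow m' n') \<longleftrightarrow>
     n' * (n + m) + n' + (n + m) \<le> n * (n' + m') + n + (n' + m')"
    using fpow_rat_pow[of n' n m] fpow_rat_pow[of n n' m'] fpow_base_le_iff by simp
  also have "\<dots> \<longleftrightarrow> m * (n' + 1) \<le> m' * (n + 1)" by (simp add: algebra_simps)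
  finally show ?thesis .
qed

lemma rat_pow_less_iff: "rat_pow m n < rat_pow m' n' \<longleftrightarrow> m * (n' + 1) < m' * (n + 1)"
  using rat_pow_le_iff[of m' n' m n] by (simp add: not_le[symmetric])

lemma mult_rat_pow: "f (rat_pow m n) (rat_pow m' n) = rat_pow (m + m' + n + 1) n"
proof (rule rat_pow_unique[symmetric])
  show "f (rat_pow m n) (rat_pow m' n) \<in> I" using rat_pow closed by simp
  have "fpow f n (f (rat_pow m n) (rat_pow m' n)) = f (fpow f n (rat_pow m n)) (fpow f n (rat_pow m' n))"
    by (rule fpow_mult_commute[OF rat_pow(1) rat_pow(1) rat_pow_commute])
  also have "\<dots> = f (fpow f (n + m) b) (fpow f (n + m') b)" using rat_pow by simp
  also have "\<dots> = fpow f ((n + m) + (n + m') + 1) b" using mult_fpow_fpow base_in by blast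
  also have "(n + m) + (n + m') + 1 = n + (m + m' + n + 1)" by simp
  finally show "fpow f n (f (rat_pow m n) (rat_pow m' n)) = fpow f (n + (m + m' + n + 1)) b" .
qed

lemma archimedean_fpow:
  assumes L: "L \<in> I" "b < L" and commute: "f L b = f b L"
  obtains n where "fpow f (Suc n) b < fpow f n L"
proof (rule ccontr)
  assume "\<not> thesis"
  then have bound: "fpow f n L \<le> fpow f (Suc n) b" for n using that by (meson not_le)
  \<comment> \<open>Dividing \<open>L\<^sup>n\<^sup>+\<^sup>2\<close> by \<open>b\<^sup>n\<^sup>+\<^sup>1\<close> gives \<open>w n\<close> with \<open>b \<cdot> w (n + 1) = L \<cdot> w n\<close>; this sequence
    increases and is bounded by \<open>L \<cdot> b\<close>, so its limit \<open>c\<close> satisfies \<open>b \<cdot> c = L \<cdot> c\<close>.\<close>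
  have "\<exists>w\<in>I. b \<le> w \<and> f (fpow f n b) w = fpow f (Suc n) L" for n
  proof (rule exists_right_quotient)
    show "fpow f n b \<in> I" "b \<le> fpow f n b" "fpow f (Suc n) L \<in> I"
      using fpow_in[of b] fpow_in[of L "Suc n"] base_in base_le_fpow_base L by auto
    have "f (fpow f n b) b = fpow f (Suc n) b" using fpow_Suc_right[OF base_in] by simp
    also have "\<dots> \<le> fpow f (Suc n) L" using fpow_le_iff[OF base_in L(1)] L(2) by (metis less_imp_le)
    finally show "f (fpow f n b) b \<le> fpow f (Suc n) L" .
  qed
  then have "\<forall>n. \<exists>w. w \<in> I \<and> f (fpow f n b) w = fpow f (Suc n) L" by blast
  then obtain w where "\<forall>n. w n \<in> I \<and> f (fpow f n b) (w n) = fpow f (Suc n) L"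
    by (auto dest: choice)
  then have w: "\<And>n. w n \<in> I" "\<And>n. f (fpow f n b) (w n) = fpow f (Suc n) L" by auto
  have P: "fpow f n b \<in> I" for n using fpow_in base_in by simp
  have commute_fpow: "f L (fpow f n b) = f (fpow f n b) L" for n
    using commute_fpow[OF L(1) base_in commute] .
  have rec: "f b (w (Suc n)) = f L (w n)" for n
  proof -
    have "f (fpow f n b) (f b (w (Suc n))) = f (fpow f (Suc n) b) (w (Suc n))"
      using assoc P base_in w fpow_Suc_right[OF base_in] by simp
    also have "\<dots> = fpow f (Suc (Suc n)) L" by (rule w(2))
    also have "\<dots> = f L (f (fpow f n b) (w n))" using w(2)[of n] by (simp only: fpow.simps(2)[of f "Suc n"])
    also have "\<dots> = f (f L (fpow f n b)) (w n)" using assoc L(1) P w by simp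
    also have "\<dots> = f (fpow f n b) (f L (w n))" using assoc L(1) P w commute_fpow by simp
    finally show ?thesis using mult_left_cancel[OF P] closed base_in w L(1) by simp
  qed
  have "w n < w (Suc n)" for n
    using rec[of n] mult_right_less_iff[of "w n" b L] mult_left_less_iff[of b "w n" "w (Suc n)"] w L base_in
    by simp
  then have "incseq w" by (intro incseq_SucI) (simp add: less_imp_le)
  moreover have "w n \<le> f L b" for n
  proof -
    have "f (fpow f n b) (w n) = f L (fpow f n L)" using w(2)[of n] by simp
    also have "\<dots> \<le> f L (f (fpow f n b) b)"
      using mult_left_le_iff[OF L(1) fpow_in[OF L(1)] closed[OF P base_in]] bound[of n]
        fpow_Suc_right[OF base_in, of n] by simp
    also have "\<dots> = f (f L (fpow f n b)) b" using assoc L(1) P base_in by simp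
    also have "\<dots> = f (fpow f n b) (f L b)" using assoc L(1) P base_in commute_fpow by simp
    finally show ?thesis using mult_left_le_iff[OF P w(1) closed[OF L(1) base_in]] by blast
  qed
  ultimately have "b = L"
    using recurrence_mult_right_cancel[where w = w and t = "f L b", OF base_in L(1) w(1) _ _
        closed[OF L(1) base_in] rec] by blast
  then show False using L(2) by simp
qed

lemma rat_pow_one_less:
  assumes d: "d \<in> I" "b < d"
  shows "\<exists>n. rat_pow 1 n < d"
proof (rule ccontr)
  \<comment> \<open>The limit of these decreasing roots commutes with \<open>b\<close>, so \<open>archimedean_fpow\<close> applies.\<close>
  assume "\<not> ?thesis"
  then have le: "d \<le> rat_pow 1 n" for n by (simp add: not_less)
  have "rat_pow 1 (Suc n) \<le> rat_pow 1 n" for n using rat_pow_le_iff[of 1 "Suc n" 1 n] by simp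
  then have "decseq (\<lambda>n. rat_pow 1 n)" by (rule decseq_SucI)
  then obtain L where L: "L \<in> I" "(\<lambda>n. rat_pow 1 n) \<longlonglongrightarrow> L" "d \<le> L" "\<forall>n. L \<le> rat_pow 1 n"
    using decseq_bounded_converges[of "\<lambda>n. rat_pow 1 n" d, OF rat_pow(1) _ le d(1)] by blast
  have "(\<lambda>n. f (rat_pow 1 n) b) \<longlonglongrightarrow> f L b"
    using tendsto_mult[OF L(2) tendsto_const L(1) base_in] rat_pow(1) base_in by blast
  moreover have "(\<lambda>n. f (rat_pow 1 n) b) \<longlonglongrightarrow> f b L"
    using tendsto_mult[OF tendsto_const L(2) base_in L(1)] rat_pow(1) base_in
    by (simp add: rat_pow_commute_base)
  ultimately have commute: "f L b = f b L" by (rule LIMSEQ_unique)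
  have "b < L" using L(3) d(2) by simp
  then obtain n where "fpow f (Suc n) b < fpow f n L" by (rule archimedean_fpow[OF L(1) _ commute])
  moreover have "fpow f n L \<le> fpow f n (rat_pow 1 n)" using fpow_le_iff[OF L(1) rat_pow(1)] L(4) by blast
  ultimately show False using rat_pow(3)[of n 1] by simp
qed

definition grid_index :: "nat \<Rightarrow> real \<Rightarrow> nat" where
  "grid_index n x = (LEAST m. x < rat_pow m n)"

lemma exists_greater_rat_pow: "x \<in> I \<Longrightarrow> \<exists>m. x < rat_pow m n"
proof -
  assume "x \<in> I"
  then obtain k where "x < fpow f k b" using fpow_base_unbounded by blast
  then show ?thesis using rat_pow_fpow[of n k] by metis
qed

lemma less_rat_pow_grid_index: "x \<in> I \<Longrightarrow> x < rat_pow (grid_index n x) n"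
  unfolding grid_index_def using LeastI_ex[OF exists_greater_rat_pow] by blast

lemma grid_index_le: "x < rat_pow m n \<Longrightarrow> grid_index n x \<le> m"
  unfolding grid_index_def by (rule Least_le)

lemma rat_pow_mono: "m \<le> m' \<Longrightarrow> rat_pow m n \<le> rat_pow m' n"
  using rat_pow_le_iff[of m n m' n] mult_le_mono1[of m m' "n + 1"] by simp

lemma less_grid_index: "x \<in> I \<Longrightarrow> rat_pow m n \<le> x \<Longrightarrow> m < grid_index n x"
proof (rule ccontr)
  assume h: "x \<in> I" "rat_pow m n \<le> x" "\<not> m < grid_index n x"
  then have "rat_pow (grid_index n x) n \<le> rat_pow m n" using rat_pow_mono by simp
  then show False using less_rat_pow_grid_index[OF h(1), of n] h by simp
qed

lemma grid_index_pos: "x \<in> I \<Longrightarrow> b \<le> x \<Longrightarrow> 1 \<le> grid_index n x"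
  using less_grid_index[of x 0 n] rat_pow_0 by simp

lemma rat_pow_grid_index_le: "x \<in> I \<Longrightarrow> b \<le> x \<Longrightarrow> rat_pow (grid_index n x - 1) n \<le> x"
proof (rule ccontr)
  assume h: "x \<in> I" "b \<le> x" "\<not> rat_pow (grid_index n x - 1) n \<le> x"
  then have "grid_index n x \<le> grid_index n x - 1" using grid_index_le by simp
  then show False using grid_index_pos[OF h(1,2), of n] by simp
qed

text \<open>The logarithm to base \<open>b\<close>, read off from the number of rational powers of \<open>b\<close> below \<open>x\<close>
  (see \<open>blog_bounds\<close>).\<close>

definition blog :: "real \<Rightarrow> real" where
  "blog x = 1 + (SUP n. (real (grid_index n x) - 1) / real (n + 1))"

lemma grid_ratio_less:
  assumes x: "x \<in> I" "b \<le> x"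
  shows "(real (grid_index k x) - 1) / real (k + 1) < real (grid_index n x) / real (n + 1)"
proof -
  have "rat_pow (grid_index k x - 1) k < rat_pow (grid_index n x) n"
    using rat_pow_grid_index_le[OF x] less_rat_pow_grid_index[OF x(1)] by (meson le_less_trans)
  then have "(grid_index k x - 1) * (n + 1) < grid_index n x * (k + 1)" using rat_pow_less_iff by simp
  then have "real (grid_index k x - 1) * real (n + 1) < real (grid_index n x) * real (k + 1)"
    by (metis of_nat_less_iff of_nat_mult)
  moreover have "real (grid_index k x - 1) = real (grid_index k x) - 1"
    using grid_index_pos[OF x, of k] by simp
  ultimately show ?thesis by (simp add: field_simps)
qed

lemma blog_bounds:
  assumes "x \<in> I" "b \<le> x"
  shows "real (grid_index n x) - 1 \<le> (blog x - 1) * real (n + 1)"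
    and "(blog x - 1) * real (n + 1) \<le> real (grid_index n x)"
proof -
  have "bdd_above (range (\<lambda>n. (real (grid_index n x) - 1) / real (n + 1)))"
    using grid_ratio_less[OF assms, of _ 0] by (intro bdd_aboveI[of _ "real (grid_index 0 x)"]) (auto simp: less_imp_le)
  then have "(real (grid_index n x) - 1) / real (n + 1) \<le> blog x - 1"
    unfolding blog_def using cSUP_upper[OF UNIV_I] by simp
  then show "real (grid_index n x) - 1 \<le> (blog x - 1) * real (n + 1)"
    by (simp add: pos_divide_le_eq)
  have "blog x - 1 \<le> real (grid_index n x) / real (n + 1)"
    unfolding blog_def using grid_ratio_less[OF assms, of _ n] by (simp add: cSUP_least less_imp_le)
  then show "(blog x - 1) * real (n + 1) \<le> real (grid_index n x)"
    by (simp add: pos_le_divide_eq)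
qed

lemma grid_index_mult:
  assumes x: "x \<in> I" "b \<le> x" and y: "y \<in> I" "b \<le> y"
  shows "grid_index n x + grid_index n y + n \<le> grid_index n (f x y)"
    and "grid_index n (f x y) \<le> grid_index n x + grid_index n y + n + 1"
proof -
  define a c where "a = grid_index n x" and "c = grid_index n y"
  have "1 \<le> a" "1 \<le> c" using grid_index_pos x y unfolding a_def c_def by auto
  have "rat_pow ((a - 1) + (c - 1) + n + 1) n = f (rat_pow (a - 1) n) (rat_pow (c - 1) n)"
    by (simp add: mult_rat_pow)
  also have "\<dots> \<le> f x (rat_pow (c - 1) n)"
    using mult_right_le_iff rat_pow_grid_index_le[OF x] rat_pow x unfolding a_def by simp
  also have "\<dots> \<le> f x y"
    using mult_left_le_iff rat_pow_grid_index_le[OF y] rat_pow x y unfolding c_def by simp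
  finally have "(a - 1) + (c - 1) + n + 1 < grid_index n (f x y)"
    using less_grid_index closed x y by simp
  then show "a + c + n \<le> grid_index n (f x y)" using \<open>1 \<le> a\<close> \<open>1 \<le> c\<close> by simp
  have "f x y < f (rat_pow a n) y"
    using mult_right_less_iff less_rat_pow_grid_index x y rat_pow unfolding a_def by simp
  also have "\<dots> < f (rat_pow a n) (rat_pow c n)"
    using mult_left_less_iff less_rat_pow_grid_index y rat_pow unfolding c_def by simp
  also have "\<dots> = rat_pow (a + c + n + 1) n" by (rule mult_rat_pow)
  finally show "grid_index n (f x y) \<le> a + c + n + 1" by (rule grid_index_le)
qed

lemma blog_mult:
  assumes x: "x \<in> I" "b \<le> x" and y: "y \<in> I" "b \<le> y"
  shows "blog (f x y) = blog x + blog y"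
proof (rule eq_zero_if_multiples_bounded[where c = 2, THEN eq_iff_diff_eq_0[THEN iffD2]])
  fix n
  have xy: "f x y \<in> I" "b \<le> f x y" using closed mult_ge_base x y by auto
  define q where "q = real (n + 1)"
  have "(blog (f x y) - (blog x + blog y)) * q
      = (blog (f x y) - 1) * q - (blog x - 1) * q - (blog y - 1) * q - q"
    by (simp add: algebra_simps)
  moreover have "real (grid_index n x) + real (grid_index n y) + real n \<le> real (grid_index n (f x y))"
    "real (grid_index n (f x y)) \<le> real (grid_index n x) + real (grid_index n y) + real n + 1"
    using grid_index_mult[OF x y, of n] by linarith+
  ultimately have "\<bar>(blog (f x y) - (blog x + blog y)) * q\<bar> \<le> 2"
    using blog_bounds[OF x, of n] blog_bounds[OF y, of n] blog_bounds[OF xy, of n]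
    unfolding q_def abs_le_iff by simp
  then show "\<bar>blog (f x y) - (blog x + blog y)\<bar> * real (n + 1) \<le> 2"
    by (simp add: q_def abs_mult)
qed

lemma blog_base: "blog b = 1"
proof (rule eq_zero_if_multiples_bounded[where c = 1, THEN eq_iff_diff_eq_0[THEN iffD2]])
  fix n
  have "b < rat_pow 1 n" using rat_pow_less_iff[of 0 n 1 n] rat_pow_0 by simp
  then have "grid_index n b = 1" using grid_index_le[of b 1 n] grid_index_pos[OF base_in order_refl, of n] by simp
  then show "\<bar>blog b - 1\<bar> * real (n + 1) \<le> 1"
    using blog_bounds[OF base_in order_refl, of n] by (simp add: abs_mult abs_le_iff)
qed

lemma blog_strict_mono:
  assumes x: "x \<in> I" "b \<le> x" and y: "y \<in> I" "b \<le> y" and xy: "x < y"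
  shows "blog x < blog y"
proof -
  \<comment> \<open>Write \<open>y \<cdot> b = x \<cdot> z\<close> with \<open>z > b\<close>; then \<open>blog z > 1\<close> gives the claim.\<close>
  have "f x b \<le> f y b" using mult_right_le_iff x y xy base_in by simp
  then obtain z where z: "z \<in> I" "b \<le> z" "f x z = f y b"
    using exists_right_quotient[OF x, of "f y b"] closed y base_in by auto
  have "z \<noteq> b" using z mult_right_cancel[of b x y] x y base_in xy by auto
  then obtain n where "rat_pow 1 n < z" using rat_pow_one_less z by force
  then have "1 < grid_index n z" using less_grid_index[of z 1 n] z by simp
  then have "2 \<le> real (grid_index n z)" by linarith
  then have "0 < (blog z - 1) * real (n + 1)" using blog_bounds(1)[OF z(1,2), of n] by linarith
  then have "1 < blog z" by (simp add: zero_less_mult_iff)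
  moreover have "blog x + blog z = blog y + 1"
    using blog_mult[OF x z(1,2)] blog_mult[OF y base_in order_refl] z(3) blog_base by simp
  ultimately show ?thesis by simp
qed

lemma continuous_on_blog: "continuous_on {x\<in>I. b \<le> x} blog"
  unfolding continuous_on_iff
proof (intro ballI allI impI)
  fix x0 e :: real
  assume "x0 \<in> {x\<in>I. b \<le> x}" and e: "0 < e"
  then have x0: "x0 \<in> I" "b \<le> x0" by auto
  obtain n :: nat where "2 / e < real n" using reals_Archimedean2 by blast
  then have en: "2 < e * real (n + 1)" using e by (simp add: pos_divide_less_eq algebra_simps)
  \<comment> \<open>Points strictly between \<open>lo\<close> and \<open>rat_pow a n\<close> have grid index \<open>a - 1\<close> or \<open>a\<close>.\<close>
  define a where "a = grid_index n x0"
  define lo where "lo = (if 2 \<le> a then rat_pow (a - 2) n else b - 1)"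
  have "1 \<le> a" using grid_index_pos[OF x0] unfolding a_def by simp
  have "x0 < rat_pow a n" using less_rat_pow_grid_index[OF x0(1)] unfolding a_def by simp
  moreover have "lo < x0"
  proof (cases "2 \<le> a")
    case True
    then have "(a - 2) * (n + 1) < (a - 1) * (n + 1)" by (intro mult_strict_right_mono) auto
    then have "rat_pow (a - 2) n < rat_pow (a - 1) n" using rat_pow_less_iff by blast
    also have "\<dots> \<le> x0" using rat_pow_grid_index_le[OF x0] unfolding a_def by simp
    finally show ?thesis using True unfolding lo_def by simp
  qed (use x0 lo_def in simp)
  ultimately have "0 < min (rat_pow a n - x0) (x0 - lo)" by simp
  moreover have "dist (blog x) (blog x0) < e"
    if x: "x \<in> {x\<in>I. b \<le> x}" and "dist x x0 < min (rat_pow a n - x0) (x0 - lo)" for x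
  proof -
    have "x < rat_pow a n" "lo < x" using that(2) by (auto simp: dist_real_def)
    then have "grid_index n x \<le> a" "a \<le> grid_index n x + 1"
      using grid_index_le less_grid_index[of x "a - 2" n] grid_index_pos[of x n] x
      by (auto simp: lo_def split: if_splits)
    then have "\<bar>(blog x - 1) * real (n + 1) - (blog x0 - 1) * real (n + 1)\<bar> \<le> 2"
      using blog_bounds[OF x0, of n] blog_bounds[of x n] x unfolding a_def by auto
    then have "\<bar>blog x - blog x0\<bar> * real (n + 1) \<le> 2"
      by (simp add: abs_mult left_diff_distrib[symmetric])
    then have "\<bar>blog x - blog x0\<bar> * real (n + 1) < e * real (n + 1)" using en by linarith
    then show ?thesis unfolding dist_real_def by (rule mult_right_less_imp_less) simp
  qed
  ultimately show "\<exists>d>0. \<forall>x\<in>{x\<in>I. b \<le> x}. dist x x0 < d \<longrightarrow> dist (blog x) (blog x0) < e"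
    by blast
qed

lemma mult_commute_ge_base: "x \<in> I \<Longrightarrow> b \<le> x \<Longrightarrow> y \<in> I \<Longrightarrow> b \<le> y \<Longrightarrow> f x y = f y x"
proof (rule ccontr)
  assume h: "x \<in> I" "b \<le> x" "y \<in> I" "b \<le> y" "f x y \<noteq> f y x"
  have K1: "f x y \<in> I" "b \<le> f x y" using closed mult_ge_base h by auto
  have K2: "f y x \<in> I" "b \<le> f y x" using closed mult_ge_base h by auto
  have "blog (f x y) = blog (f y x)" using blog_mult h by simp
  moreover have "blog (f x y) \<noteq> blog (f y x)"
    using blog_strict_mono[OF K1 K2] blog_strict_mono[OF K2 K1] h(5) by (metis linorder_neq_iff order_less_irrefl)
  ultimately show False by simp
qed

lemma mult_base_commute: "x \<in> I \<Longrightarrow> f x b = f b x"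
proof -
  assume x: "x \<in> I"
  obtain k where k: "b < mult_right_iter f b k x" using mult_right_iter_unbounded[OF x base_in] by blast
  show ?thesis
  proof (cases k)
    case 0
    then show ?thesis using mult_commute_ge_base[of x b] x k base_in by simp
  next
    case (Suc j)
    define P where "P = fpow f j b"
    have P: "P \<in> I" unfolding P_def using fpow_in base_in by simp
    have X: "f x P \<in> I" "b \<le> f x P" using k Suc mult_right_iter_Suc[OF x base_in] closed x P unfolding P_def by auto
    have c: "f (f x P) b = f b (f x P)" using mult_commute_ge_base[OF X base_in order_refl] .
    have "f (f x P) b = f (f x b) P"
    proof -
      have "f (f x P) b = f x (f P b)" using assoc x P base_in by simp
      also have "\<dots> = f x (f b P)" using commute_base_fpow_base unfolding P_def by simp
      also have "\<dots> = f (f x b) P" using assoc x P base_in by simp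
      finally show ?thesis .
    qed
    moreover have "f b (f x P) = f (f b x) P" using assoc x P base_in by simp
    ultimately have "f (f x b) P = f (f b x) P" using c by simp
    then show ?thesis using mult_right_cancel P closed x base_in by simp
  qed
qed

lemma mult_right_iter_less_Suc: "x \<in> I \<Longrightarrow> mult_right_iter f b k x < mult_right_iter f b (Suc k) x"
  using less_mult_right[OF base_in base_expanding mult_right_iter_in[OF _ base_in]] by simp

lemma mult_right_iter_mono: "x \<in> I \<Longrightarrow> k \<le> k' \<Longrightarrow> mult_right_iter f b k x \<le> mult_right_iter f b k' x"
  using lift_Suc_mono_le[of "\<lambda>k. mult_right_iter f b k x"] mult_right_iter_less_Suc by (simp add: less_imp_le)

definition base_shift :: "real \<Rightarrow> nat" where
  "base_shift x = (LEAST k. b \<le> mult_right_iter f b k x)"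

text \<open>Translating by powers of \<open>b\<close> extends \<open>blog\<close> from the elements above \<open>b\<close> to all of \<open>I\<close>;
  by \<open>generator_eq\<close> any sufficiently large power may be used.\<close>

definition generator :: "real \<Rightarrow> real" where
  "generator x = blog (mult_right_iter f b (base_shift x) x) - real (base_shift x)"

lemma blog_mult_right_iter_Suc: "x \<in> I \<Longrightarrow> b \<le> mult_right_iter f b k x \<Longrightarrow>
    blog (mult_right_iter f b (Suc k) x) - real (Suc k) = blog (mult_right_iter f b k x) - real k"
  using blog_mult[OF mult_right_iter_in[OF _ base_in] _ base_in order_refl] blog_base by simp

lemma generator_eq:
  assumes x: "x \<in> I" and j: "b \<le> mult_right_iter f b j x"
  shows "generator x = blog (mult_right_iter f b j x) - real j"
proof -
  define k0 where "k0 = base_shift x"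
  have k0j: "k0 \<le> j" unfolding k0_def base_shift_def using j by (rule Least_le)
  have k0b: "b \<le> mult_right_iter f b k0 x" unfolding k0_def base_shift_def using j by (rule LeastI)
  have "blog (mult_right_iter f b (k0 + d) x) - real (k0 + d) = blog (mult_right_iter f b k0 x) - real k0" for d
  proof (induction d)
    case 0 then show ?case by simp
  next
    case (Suc d)
    have "b \<le> mult_right_iter f b (k0 + d) x" using k0b mult_right_iter_mono[OF x, of k0 "k0 + d"] by simp
    then show ?case using blog_mult_right_iter_Suc[OF x, of "k0 + d"] Suc by simp
  qed
  from this[of "j - k0"] k0j show ?thesis unfolding generator_def k0_def[symmetric] by simp
qed

lemma generator_strict_mono: "x \<in> I \<Longrightarrow> y \<in> I \<Longrightarrow> x < y \<Longrightarrow> generator x < generator y"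
proof -
  assume h: "x \<in> I" "y \<in> I" "x < y"
  obtain k where k: "b < mult_right_iter f b k x" using mult_right_iter_unbounded[OF h(1) base_in] by blast
  have "mult_right_iter f b k x < mult_right_iter f b k y" using mult_right_iter_strict_mono base_in h by simp
  then have "blog (mult_right_iter f b k x) < blog (mult_right_iter f b k y)"
    using blog_strict_mono mult_right_iter_in h base_in k by simp
  moreover have "generator x = blog (mult_right_iter f b k x) - real k" using generator_eq h k by simp
  moreover have "generator y = blog (mult_right_iter f b k y) - real k" using generator_eq h k \<open>mult_right_iter f b k x < mult_right_iter f b k y\<close> by simp
  ultimately show ?thesis by simp
qed

lemma mult_right_iter_mult:
  assumes x: "x \<in> I" and y: "y \<in> I"
  shows "mult_right_iter f b (Suc (m + m + 1)) (f x y)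
    = f (mult_right_iter f b (Suc m) x) (mult_right_iter f b (Suc m) y)"
proof -
  define P where "P = fpow f m b"
  have P: "P \<in> I" unfolding P_def using fpow_in base_in by simp
  have commute: "f y P = f P y"
    using commute_fpow[OF y base_in mult_base_commute[OF y], of m] unfolding P_def by simp
  have "f (f x y) (f P P) = f x (f (f y P) P)" using assoc x y P closed by simp
  also have "\<dots> = f x (f (f P y) P)" by (simp only: commute)
  also have "\<dots> = f (f x P) (f y P)" using assoc x y P closed by simp
  finally have "f (f x y) (f P P) = f (f x P) (f y P)" .
  then show ?thesis
    unfolding mult_right_iter_Suc[OF closed[OF x y] base_in] mult_right_iter_Suc[OF x base_in]
      mult_right_iter_Suc[OF y base_in] mult_fpow_fpow[OF base_in, symmetric] P_def .
qed

lemma generator_mult: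
  assumes x: "x \<in> I" and y: "y \<in> I"
  shows "generator (f x y) = generator x + generator y"
proof -
  obtain kx ky where kx: "b < mult_right_iter f b kx x" and ky: "b < mult_right_iter f b ky y"
    using mult_right_iter_unbounded x y base_in by metis
  define m where "m = max kx ky"
  have "kx \<le> Suc m" "ky \<le> Suc m" unfolding m_def by auto
  then have x_shift: "b \<le> mult_right_iter f b (Suc m) x" and y_shift: "b \<le> mult_right_iter f b (Suc m) y"
    using less_le_trans[OF kx mult_right_iter_mono[OF x]] less_le_trans[OF ky mult_right_iter_mono[OF y]]
    by (blast intro: less_imp_le)+
  let ?k = "Suc (m + m + 1)" and ?x = "mult_right_iter f b (Suc m) x" and ?y = "mult_right_iter f b (Suc m) y"
  have in_I: "?x \<in> I" "?y \<in> I" using mult_right_iter_in x y base_in by blast+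
  have "generator (f x y) = blog (mult_right_iter f b ?k (f x y)) - real ?k"
    using generator_eq[OF closed[OF x y], of ?k] mult_ge_base[OF in_I(1) x_shift in_I(2) y_shift]
    unfolding mult_right_iter_mult[OF x y] by blast
  also have "\<dots> = (blog ?x - real (Suc m)) + (blog ?y - real (Suc m))"
    unfolding mult_right_iter_mult[OF x y] blog_mult[OF in_I(1) x_shift in_I(2) y_shift] by simp
  also have "\<dots> = generator x + generator y"
    using generator_eq[OF x x_shift] generator_eq[OF y y_shift] by simp
  finally show ?thesis .
qed

lemma continuous_on_generator: "continuous_on I generator"
  unfolding continuous_on_iff
proof (intro ballI allI impI)
  fix x0 e :: real
  assume x0: "x0 \<in> I" and e: "0 < e"
  obtain j where j: "b < mult_right_iter f b j x0" using mult_right_iter_unbounded[OF x0 base_in] by blast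
  define z0 where "z0 = mult_right_iter f b j x0"
  have z0: "z0 \<in> {x\<in>I. b \<le> x}" using j mult_right_iter_in x0 base_in unfolding z0_def by auto
  obtain d1 where d1: "d1 > 0" "\<forall>z\<in>{x\<in>I. b \<le> x}. dist z z0 < d1 \<longrightarrow> dist (blog z) (blog z0) < e"
    using continuous_on_blog z0 e unfolding continuous_on_iff by blast
  have ep: "min d1 (z0 - b) > 0" using d1 j unfolding z0_def by simp
  obtain d2 where d2: "d2 > 0" "\<forall>x\<in>I. dist x x0 < d2 \<longrightarrow> dist (mult_right_iter f b j x) (mult_right_iter f b j x0) < min d1 (z0 - b)"
    using continuous_on_mult_right_iter[OF base_in, of j] x0 ep unfolding continuous_on_iff by blast
  show "\<exists>d>0. \<forall>x'\<in>I. dist x' x0 < d \<longrightarrow> dist (generator x') (generator x0) < e"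
  proof (intro exI[of _ d2] conjI ballI impI d2(1))
    fix x assume xI: "x \<in> I" and dx: "dist x x0 < d2"
    have dd: "dist (mult_right_iter f b j x) z0 < min d1 (z0 - b)" using d2 xI dx unfolding z0_def by blast
    then have bz: "b \<le> mult_right_iter f b j x" unfolding dist_real_def by auto
    have "mult_right_iter f b j x \<in> {x\<in>I. b \<le> x}" using bz mult_right_iter_in xI base_in by auto
    then have "dist (blog (mult_right_iter f b j x)) (blog z0) < e" using d1 dd by auto
    moreover have "generator x = blog (mult_right_iter f b j x) - real j" using generator_eq xI bz by simp
    moreover have "generator x0 = blog z0 - real j" using generator_eq x0 j unfolding z0_def by simp
    ultimately show "dist (generator x) (generator x0) < e" unfolding dist_real_def by simp
  qed
qed

end

context cancellative_interval_semigroup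
begin

lemma reflection: "cancellative_interval_semigroup (uminus ` I) (\<lambda>x y. - f (- x) (- y))"
proof -
  have mem: "z \<in> uminus ` I \<longleftrightarrow> - z \<in> I" for z by force
  show ?thesis
  proof
    obtain u v where "u \<in> I" "v \<in> I" "u \<noteq> v" using nontrivial by blast
    then show "\<exists>x\<in>uminus ` I. \<exists>y\<in>uminus ` I. x \<noteq> y" by (metis image_eqI neg_equal_iff_equal)
    have "continuous_on (uminus ` I \<times> uminus ` I) (\<lambda>p. f (- fst p) (- snd p))"
      by (rule continuous_on_mult) (auto intro!: continuous_intros simp: mem)
    then show "continuous_on (uminus ` I \<times> uminus ` I) (\<lambda>p. - f (- fst p) (- snd p))"
      by (rule continuous_on_minus)
    show "inj_on (\<lambda>y. - f (- x) (- y)) (uminus ` I)" if "x \<in> uminus ` I" for x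
      using that inj_left[of "- x"] unfolding inj_on_def by (simp add: mem)
    show "inj_on (\<lambda>z. - f (- z) (- y)) (uminus ` I)" if "y \<in> uminus ` I" for y
      using that inj_right[of "- y"] unfolding inj_on_def by (simp add: mem)
  qed (use interval closed assoc mem in auto)
qed

theorem exists_additive_generator:
  obtains \<Phi> :: "real \<Rightarrow> real"
  where "continuous_on I \<Phi>" "strict_mono_on I \<Phi>" "\<And>x y. x \<in> I \<Longrightarrow> y \<in> I \<Longrightarrow> \<Phi> (f x y) = \<Phi> x + \<Phi> y"
proof (cases "\<exists>b\<in>I. b < f b b")
  case True
  then obtain b where "b \<in> I" "b < f b b" by blast
  then interpret expanding_base I f b by unfold_locales
  show ?thesis
    using that continuous_on_generator generator_mult by (simp add: generator_strict_mono strict_mono_onI)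
next
  case False
  \<comment> \<open>At most one element is idempotent, so some \<open>x\<close> has \<open>f x x < x\<close>; then \<open>- x\<close>
    is expanding for the reflected operation.\<close>
  obtain x where x: "x \<in> I" "f x x < x"
  proof -
    obtain u v where uv: "u \<in> I" "v \<in> I" "u \<noteq> v" using nontrivial by blast
    then have "f u u \<noteq> u \<or> f v v \<noteq> v" using idempotent_unique by blast
    then show ?thesis using that uv False by (metis not_less order_le_less)
  qed
  interpret refl: cancellative_interval_semigroup "uminus ` I" "\<lambda>x y. - f (- x) (- y)"
    by (rule reflection)
  interpret refl_base: expanding_base "uminus ` I" "\<lambda>x y. - f (- x) (- y)" "- x"
    using x by unfold_locales auto
  let ?\<Phi> = "\<lambda>z. - refl_base.generator (- z)"
  show ?thesis
  proof (rule that)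
    have "continuous_on I (\<lambda>z. refl_base.generator (- z))"
      by (rule continuous_on_compose2[OF refl_base.continuous_on_generator]) (auto intro: continuous_intros)
    then show "continuous_on I ?\<Phi>" by (rule continuous_on_minus)
    show "strict_mono_on I ?\<Phi>"
      by (rule strict_mono_onI) (simp add: refl_base.generator_strict_mono)
    show "?\<Phi> (f y z) = ?\<Phi> y + ?\<Phi> z" if "y \<in> I" "z \<in> I" for y z
      using refl_base.generator_mult[of "- y" "- z"] that by simp
  qed
qed

end

section \<open>Additively closed intervals\<close>

definition additive_interval :: "real set \<Rightarrow> bool" where
  "additive_interval J \<longleftrightarrow>
     (\<exists>b. b \<le> 0 \<and> (J = {..<b} \<or> J = {..b})) \<or> (\<exists>a. 0 \<le> a \<and> (J = {a<..} \<or> J = {a..})) \<or> J = UNIV"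

lemma additive_interval_add: "additive_interval J \<Longrightarrow> s \<in> J \<Longrightarrow> t \<in> J \<Longrightarrow> s + t \<in> J"
  unfolding additive_interval_def by (elim disjE exE conjE) auto

lemma sum_list_in_additive_interval:
  assumes "additive_interval J" "xs \<noteq> []" "set xs \<subseteq> I" "\<phi> ` I = J"
  shows "sum_list (map \<phi> xs) \<in> J"
  using assms(2,3)
proof (induction xs)
  case (Cons x ys)
  have "\<phi> x \<in> J" using Cons.prems assms(4) by auto
  then show ?case
    using Cons additive_interval_add[OF assms(1) \<open>\<phi> x \<in> J\<close>] by (cases "ys = []") auto
qed simp

lemma additively_closed_multiple:
  fixes J :: "real set"
  assumes "\<forall>s\<in>J. \<forall>t\<in>J. s + t \<in> J" "s \<in> J"
  shows "real (Suc n) * s \<in> J"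
proof (induction n)
  case (Suc n)
  have "real (Suc (Suc n)) * s = real (Suc n) * s + s" by (simp add: algebra_simps)
  then show ?case using Suc assms by simp
qed (use assms in simp)

lemma additively_closed_unbounded_above:
  fixes J :: "real set"
  assumes "\<forall>s\<in>J. \<forall>t\<in>J. s + t \<in> J" "t \<in> J" "0 < t"
  shows "\<exists>k\<in>J. x \<le> k"
proof -
  obtain n :: nat where "x / t < real n" using reals_Archimedean2 by blast
  then have "x \<le> real (Suc n) * t" using assms(3) by (simp add: pos_divide_less_eq algebra_simps)
  then show ?thesis using additively_closed_multiple[OF assms(1,2)] by blast
qed

lemma additively_closed_unbounded_below:
  fixes J :: "real set"
  assumes "\<forall>s\<in>J. \<forall>t\<in>J. s + t \<in> J" "s \<in> J" "s < 0"
  shows "\<exists>k\<in>J. k \<le> x"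
proof -
  obtain n :: nat where "x / s < real n" using reals_Archimedean2 by blast
  then have "real n * s < x" using assms(3) by (simp add: neg_divide_less_eq)
  then have "real (Suc n) * s \<le> x" using assms(3) by (simp add: algebra_simps)
  then show ?thesis using additively_closed_multiple[OF assms(1,2)] by blast
qed

lemma interval_unbounded_above_cases:
  fixes J :: "real set"
  assumes "is_interval J" "J \<noteq> {}" "bdd_below J" "\<And>x. \<exists>k\<in>J. x \<le> k"
  shows "J = {Inf J<..} \<or> J = {Inf J..}"
proof -
  have "x \<in> J" if x: "Inf J < x" for x
  proof -
    obtain j where "j \<in> J" "j < x" using cInf_lessD[OF assms(2) x] by blast
    moreover obtain k where "k \<in> J" "x \<le> k" using assms(4) by blast
    ultimately show ?thesis using assms(1) unfolding is_interval_1 by (meson less_imp_le)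
  qed
  moreover have "Inf J \<le> x" if "x \<in> J" for x using cInf_lower[OF that assms(3)] .
  ultimately show ?thesis by (cases "Inf J \<in> J") (auto simp: order_le_less)
qed

lemma interval_unbounded_below_cases:
  fixes J :: "real set"
  assumes "is_interval J" "J \<noteq> {}" "bdd_above J" "\<And>x. \<exists>k\<in>J. k \<le> x"
  shows "J = {..<Sup J} \<or> J = {..Sup J}"
proof -
  have "x \<in> J" if x: "x < Sup J" for x
  proof -
    obtain j where "j \<in> J" "x < j" using less_cSupD[OF assms(2) x] by blast
    moreover obtain k where "k \<in> J" "k \<le> x" using assms(4) by blast
    ultimately show ?thesis using assms(1) unfolding is_interval_1 by (meson less_imp_le)
  qed
  moreover have "x \<le> Sup J" if "x \<in> J" for x using cSup_upper[OF that assms(3)] .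
  ultimately show ?thesis by (cases "Sup J \<in> J") (auto simp: order_le_less)
qed

lemma additive_intervalI:
  fixes J :: "real set"
  assumes J: "is_interval J" and nontrivial: "\<exists>s\<in>J. \<exists>t\<in>J. s \<noteq> t"
    and add: "\<forall>s\<in>J. \<forall>t\<in>J. s + t \<in> J"
  shows "additive_interval J"
proof -
  have "J \<noteq> {}" using nontrivial by blast
  consider (both) s t where "s \<in> J" "s < 0" "t \<in> J" "0 < t"
    | (nonneg) "\<forall>s\<in>J. 0 \<le> s" "\<exists>t\<in>J. 0 < t"
    | (nonpos) "\<forall>s\<in>J. s \<le> 0" "\<exists>s\<in>J. s < 0"
  proof -
    obtain u v where uv: "u \<in> J" "v \<in> J" "u \<noteq> v" using nontrivial by blast
    then obtain t where t: "t \<in> J" "t \<noteq> 0" by (cases "u = 0") auto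
    show ?thesis
    proof (cases "\<exists>s\<in>J. s < 0")
      case neg: True
      show ?thesis
      proof (cases "\<exists>t\<in>J. 0 < t")
        case True
        then show ?thesis using neg that(1) by blast
      next
        case False
        then show ?thesis using neg that(3) by (auto simp: not_less)
      qed
    next
      case False
      then show ?thesis using t that(2) by (auto simp: not_less) (metis order_le_less)
    qed
  qed
  then show ?thesis
  proof cases
    case both
    have "x \<in> J" for x
      using additively_closed_unbounded_below[OF add both(1,2), of x]
        additively_closed_unbounded_above[OF add both(3,4), of x] J
      unfolding is_interval_1 by blast
    then show ?thesis unfolding additive_interval_def by auto
  next
    case nonneg
    then have "0 \<le> Inf J" using \<open>J \<noteq> {}\<close> by (simp add: cInf_greatest)
    moreover have "J = {Inf J<..} \<or> J = {Inf J..}"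
      using nonneg additively_closed_unbounded_above[OF add] \<open>J \<noteq> {}\<close>
      by (intro interval_unbounded_above_cases J) (auto intro: bdd_belowI)
    ultimately show ?thesis unfolding additive_interval_def by blast
  next
    case nonpos
    then have "Sup J \<le> 0" using \<open>J \<noteq> {}\<close> by (simp add: cSup_least)
    moreover have "J = {..<Sup J} \<or> J = {..Sup J}"
      using nonpos additively_closed_unbounded_below[OF add] \<open>J \<noteq> {}\<close>
      by (intro interval_unbounded_below_cases J) (auto intro: bdd_aboveI)
    ultimately show ?thesis unfolding additive_interval_def by blast
  qed
qed

lemma additive_interval_unbounded: "additive_interval J \<Longrightarrow> \<not> bounded J"
proof
  assume J: "additive_interval J" and "bounded J"
  then have bdd: "bdd_above J" "bdd_below J" by (auto intro: bounded_imp_bdd_above bounded_imp_bdd_below)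
  have add: "\<forall>s\<in>J. \<forall>t\<in>J. s + t \<in> J" using additive_interval_add[OF J] by blast
  have "\<exists>t\<in>J. t \<noteq> 0"
    using J unfolding additive_interval_def
  proof (elim disjE exE conjE)
    fix b :: real assume "J = {..<b}" then show ?thesis by (intro bexI[of _ "min (b - 1) (- 1)"]) auto
  next
    fix b :: real assume "J = {..b}" then show ?thesis by (intro bexI[of _ "min (b - 1) (- 1)"]) auto
  next
    fix a :: real assume "J = {a<..}" then show ?thesis by (intro bexI[of _ "max (a + 1) 1"]) auto
  next
    fix a :: real assume "J = {a..}" then show ?thesis by (intro bexI[of _ "max (a + 1) 1"]) auto
  qed auto
  then obtain t where "t \<in> J" "t \<noteq> 0" by blast
  then consider "t \<in> J" "0 < t" | "t \<in> J" "t < 0" by linarith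
  then show False
  proof cases
    case 1
    obtain B where "\<forall>x\<in>J. x \<le> B" using bdd(1) unfolding bdd_above_def by blast
    then show False using additively_closed_unbounded_above[OF add 1, of "B + 1"] by force
  next
    case 2
    obtain B where "\<forall>x\<in>J. B \<le> x" using bdd(2) unfolding bdd_below_def by blast
    then show False using additively_closed_unbounded_below[OF add 2, of "B - 1"] by force
  qed
qed

section \<open>Additive representations\<close>

lemma strictly_monotonic_on_imp_inj_on:
  "strictly_monotonic_on S (g :: 'a::linorder \<Rightarrow> 'b::linorder) \<Longrightarrow> inj_on g S"
  unfolding strictly_monotonic_on_def inj_on_def monotone_on_def
  by (metis linorder_neq_iff order_less_irrefl)

lemma strictly_monotonic_on_compose:
  fixes g h :: "real \<Rightarrow> real"
  assumes "strict_mono_on S g" "g ` S \<subseteq> T" "strictly_monotonic_on T h"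
  shows "strictly_monotonic_on S (\<lambda>x. h (g x))"
  using assms unfolding strictly_monotonic_on_def monotone_on_def by (auto simp: image_subset_iff)

locale additive_representation =
  fixes I :: "real set" and F :: "real list \<Rightarrow> real" and J :: "real set" and \<phi> \<psi> :: "real \<Rightarrow> real"
  assumes J: "additive_interval J"
    and continuous_\<phi>: "continuous_on I \<phi>" and strictly_monotonic_\<phi>: "strictly_monotonic_on I \<phi>"
    and image: "\<phi> ` I = J"
    and continuous_\<psi>: "continuous_on J \<psi>" and strictly_monotonic_\<psi>: "strictly_monotonic_on J \<psi>"
    and F_eq: "xs \<noteq> [] \<Longrightarrow> set xs \<subseteq> I \<Longrightarrow> F xs = \<psi> (sum_list (map \<phi> xs))"
begin

lemma inj_\<phi>: "inj_on \<phi> I" and inj_\<psi>: "inj_on \<psi> J"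
  using strictly_monotonic_\<phi> strictly_monotonic_\<psi> by (auto intro: strictly_monotonic_on_imp_inj_on)

lemma sum_in_J: "xs \<noteq> [] \<Longrightarrow> set xs \<subseteq> I \<Longrightarrow> sum_list (map \<phi> xs) \<in> J"
  using sum_list_in_additive_interval[OF J _ _ image] by blast

lemma preassociative:
  assumes "standard I F"
  shows "preassociative I F"
  unfolding preassociative_def
proof (intro ballI impI)
  fix x y y' z assume tuples: "x \<in> tuples I" "y \<in> tuples I" "y' \<in> tuples I" "z \<in> tuples I"
    and eq: "F y = F y'"
  then have sets: "set x \<subseteq> I" "set y \<subseteq> I" "set y' \<subseteq> I" "set z \<subseteq> I" by (auto simp: tuples_def)
  have "xs = []" if "xs \<in> tuples I" "F xs = F []" for xs
    using assms that unfolding standard_def by blast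
  then have empty: "y = [] \<longleftrightarrow> y' = []" using eq tuples(2,3) by auto
  show "F (x @ y @ z) = F (x @ y' @ z)"
  proof (cases "y = []")
    case False
    then have "y' \<noteq> []" using empty by simp
    then have "\<psi> (sum_list (map \<phi> y)) = \<psi> (sum_list (map \<phi> y'))"
      using eq False sets F_eq by simp
    then have "sum_list (map \<phi> y) = sum_list (map \<phi> y')"
      using inj_onD[OF inj_\<psi>] sum_in_J False \<open>y' \<noteq> []\<close> sets by blast
    then show ?thesis using False \<open>y' \<noteq> []\<close> sets F_eq[of "x @ y @ z"] F_eq[of "x @ y' @ z"] by simp
  qed (use empty in simp)
qed

lemma unarily_quasi_range_idempotent: "unarily_quasi_range_idempotent I F"
  unfolding unarily_quasi_range_idempotent_def
proof (intro equalityI subsetI)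
  fix v assume "v \<in> (\<lambda>x. F [x]) ` I"
  then show "v \<in> F ` (tuples I - {[]})" by (auto simp: tuples_def)
next
  fix v assume "v \<in> F ` (tuples I - {[]})"
  then obtain xs where xs: "set xs \<subseteq> I" "xs \<noteq> []" "v = F xs" by (auto simp: tuples_def)
  then have "sum_list (map \<phi> xs) \<in> \<phi> ` I" using sum_in_J image by simp
  then obtain x where x: "x \<in> I" "\<phi> x = sum_list (map \<phi> xs)" by (metis imageE)
  then have "v = F [x]" using xs F_eq[of "[x]"] F_eq[of xs] by simp
  then show "v \<in> (\<lambda>x. F [x]) ` I" using x(1) by blast
qed

lemma continuous_on_unary: "continuous_on I (\<lambda>x. F [x])"
proof -
  have "continuous_on I (\<lambda>x. \<psi> (\<phi> x))"
    by (rule continuous_on_compose2[OF continuous_\<psi> continuous_\<phi>]) (use image in auto)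
  then show ?thesis by (rule continuous_on_eq) (simp add: F_eq)
qed

lemma continuous_on_binary: "continuous_on (I \<times> I) (\<lambda>p. F [fst p, snd p])"
proof -
  have "continuous_on (I \<times> I) (\<lambda>p. \<phi> (fst p) + \<phi> (snd p))"
    by (intro continuous_intros continuous_on_compose2[OF continuous_\<phi>]) auto
  then have "continuous_on (I \<times> I) (\<lambda>p. \<psi> (\<phi> (fst p) + \<phi> (snd p)))"
    by (rule continuous_on_compose2[OF continuous_\<psi>])
       (use additive_interval_add[OF J] image in fastforce)
  then show ?thesis by (rule continuous_on_eq) (auto simp: F_eq)
qed

lemma inj_on_unary: "inj_on (\<lambda>x. F [x]) I"
proof (rule inj_onI)
  fix x y assume "x \<in> I" "y \<in> I" "F [x] = F [y]"
  then have "\<psi> (\<phi> x) = \<psi> (\<phi> y)" using F_eq[of "[_]"] by simp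
  then have "\<phi> x = \<phi> y" using inj_onD[OF inj_\<psi>] image \<open>x \<in> I\<close> \<open>y \<in> I\<close> by blast
  then show "x = y" using inj_onD[OF inj_\<phi>] \<open>x \<in> I\<close> \<open>y \<in> I\<close> by blast
qed

lemma binary_eq_imp_sum_eq:
  assumes "x \<in> I" "y \<in> I" "x' \<in> I" "y' \<in> I" "F [x, y] = F [x', y']"
  shows "\<phi> x + \<phi> y = \<phi> x' + \<phi> y'"
proof -
  have "\<phi> x \<in> J" "\<phi> y \<in> J" "\<phi> x' \<in> J" "\<phi> y' \<in> J" using image assms(1-4) by auto
  then have "\<phi> x + \<phi> y \<in> J" "\<phi> x' + \<phi> y' \<in> J" using additive_interval_add[OF J] by auto
  moreover have "\<psi> (\<phi> x + \<phi> y) = \<psi> (\<phi> x' + \<phi> y')"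
    using assms F_eq[of "[x, y]"] F_eq[of "[x', y']"] by simp
  ultimately show ?thesis using inj_onD[OF inj_\<psi>] by blast
qed

lemma inj_on_binary_left: "x \<in> I \<Longrightarrow> inj_on (\<lambda>y. F [x, y]) I"
proof (rule inj_onI)
  fix y y' assume "x \<in> I" "y \<in> I" "y' \<in> I" "F [x, y] = F [x, y']"
  then have "\<phi> y = \<phi> y'" using binary_eq_imp_sum_eq[of x y x y'] by simp
  then show "y = y'" using inj_onD[OF inj_\<phi>] \<open>y \<in> I\<close> \<open>y' \<in> I\<close> by blast
qed

lemma inj_on_binary_right: "y \<in> I \<Longrightarrow> inj_on (\<lambda>x. F [x, y]) I"
proof (rule inj_onI)
  fix x x' assume "y \<in> I" "x \<in> I" "x' \<in> I" "F [x, y] = F [x', y]"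
  then have "\<phi> x = \<phi> x'" using binary_eq_imp_sum_eq[of x y x' y] by simp
  then show "x = x'" using inj_onD[OF inj_\<phi>] \<open>x \<in> I\<close> \<open>x' \<in> I\<close> by blast
qed

lemma \<psi>_eq: "t \<in> J \<Longrightarrow> \<psi> t = F [inv_into I \<phi> t]"
  using image F_eq[of "[inv_into I \<phi> t]"] by (simp add: inv_into_into f_inv_into_f)

lemma not_compact_domain: "\<not> (\<exists>m\<in>I. \<forall>x\<in>I. m \<le> x) \<or> \<not> (\<exists>M\<in>I. \<forall>x\<in>I. x \<le> M)"
  if "is_interval I"
proof (rule ccontr)
  \<comment> \<open>A compact \<open>I\<close> would have a compact, hence bounded, image \<open>J\<close>.\<close>
  assume "\<not> ?thesis"
  then obtain m M where m: "m \<in> I" "\<forall>x\<in>I. m \<le> x" and M: "M \<in> I" "\<forall>x\<in>I. x \<le> M" by blast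
  moreover have "{m..M} \<subseteq> I"
    using connected_contains_Icc[OF that[unfolded is_interval_connected_1] m(1) M(1)] .
  ultimately have "I = {m..M}" by auto
  then have "compact J" using compact_continuous_image[OF continuous_\<phi>] image by simp
  then show False using compact_imp_bounded additive_interval_unbounded[OF J] by blast
qed

end

locale regular_preassociative =
  fixes I :: "real set" and F :: "real list \<Rightarrow> real"
  assumes interval: "is_interval I" and nontrivial: "\<exists>x\<in>I. \<exists>y\<in>I. x \<noteq> y"
    and preassociative: "preassociative I F"
    and unarily_quasi_range_idempotent: "unarily_quasi_range_idempotent I F"
    and continuous_unary: "continuous_on I (\<lambda>x. F [x])" and inj_unary: "inj_on (\<lambda>x. F [x]) I"
    and continuous_binary: "continuous_on (I \<times> I) (\<lambda>p. F [fst p, snd p])"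
    and inj_binary_left: "\<forall>x\<in>I. inj_on (\<lambda>y. F [x, y]) I"
    and inj_binary_right: "\<forall>y\<in>I. inj_on (\<lambda>x. F [x, y]) I"
begin

lemma preassociativeD:
  "set x \<subseteq> I \<Longrightarrow> set y \<subseteq> I \<Longrightarrow> set y' \<subseteq> I \<Longrightarrow> set z \<subseteq> I \<Longrightarrow> F y = F y' \<Longrightarrow>
    F (x @ y @ z) = F (x @ y' @ z)"
  using preassociative unfolding preassociative_def tuples_def by blast

lemma in_unary_range: "xs \<noteq> [] \<Longrightarrow> set xs \<subseteq> I \<Longrightarrow> F xs \<in> (\<lambda>x. F [x]) ` I"
  using unarily_quasi_range_idempotent unfolding unarily_quasi_range_idempotent_def tuples_def
  by blast

text \<open>By unary quasi-range-idempotence every \<open>F [x, y]\<close> is a value \<open>F [z]\<close>; the induced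
  operation picks this (unique) \<open>z\<close>.\<close>

definition induced_mult :: "real \<Rightarrow> real \<Rightarrow> real" where
  "induced_mult x y = inv_into I (\<lambda>z. F [z]) (F [x, y])"

lemma induced_mult_in: "x \<in> I \<Longrightarrow> y \<in> I \<Longrightarrow> induced_mult x y \<in> I"
  unfolding induced_mult_def using in_unary_range[of "[x, y]"] by (simp add: inv_into_into)

lemma unary_induced_mult: "x \<in> I \<Longrightarrow> y \<in> I \<Longrightarrow> F [induced_mult x y] = F [x, y]"
  unfolding induced_mult_def using in_unary_range[of "[x, y]"] f_inv_into_f[of _ "\<lambda>z. F [z]"]
  by simp

lemma induced_mult_assoc:
  assumes "x \<in> I" "y \<in> I" "z \<in> I"
  shows "induced_mult (induced_mult x y) z = induced_mult x (induced_mult y z)"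
proof (rule inj_onD[OF inj_unary])
  have "F [induced_mult (induced_mult x y) z] = F ([] @ [induced_mult x y] @ [z])"
    using assms by (simp add: unary_induced_mult induced_mult_in)
  also have "\<dots> = F ([] @ [x, y] @ [z])"
    using assms by (intro preassociativeD) (auto simp: unary_induced_mult induced_mult_in)
  also have "\<dots> = F ([x] @ [y, z] @ [])" by simp
  also have "\<dots> = F ([x] @ [induced_mult y z] @ [])"
    using assms by (intro preassociativeD) (auto simp: unary_induced_mult induced_mult_in)
  also have "\<dots> = F [induced_mult x (induced_mult y z)]"
    using assms by (simp add: unary_induced_mult induced_mult_in)
  finally show "F [induced_mult (induced_mult x y) z] = F [induced_mult x (induced_mult y z)]" .
qed (use assms induced_mult_in in auto)

sublocale induced: cancellative_interval_semigroup I induced_mult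
proof
  have "continuous_on (I \<times> I) (\<lambda>p. inv_into I (\<lambda>z. F [z]) (F [fst p, snd p]))"
    by (rule continuous_on_compose2[OF continuous_on_inv_into_interval continuous_binary])
       (use interval continuous_unary inj_unary in_unary_range in auto)
  then show "continuous_on (I \<times> I) (\<lambda>p. induced_mult (fst p) (snd p))"
    unfolding induced_mult_def .
  show "inj_on (induced_mult x) I" if "x \<in> I" for x
  proof (rule inj_onI)
    fix y y' assume "y \<in> I" "y' \<in> I" "induced_mult x y = induced_mult x y'"
    then have "F [x, y] = F [x, y']" using that unary_induced_mult by metis
    then show "y = y'" using inj_binary_left that \<open>y \<in> I\<close> \<open>y' \<in> I\<close> by (auto dest: inj_onD)
  qed
  show "inj_on (\<lambda>z. induced_mult z y) I" if "y \<in> I" for y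
  proof (rule inj_onI)
    fix x x' assume "x \<in> I" "x' \<in> I" "induced_mult x y = induced_mult x' y"
    then have "F [x, y] = F [x', y]" using that unary_induced_mult by metis
    then show "x = x'" using inj_binary_right that \<open>x \<in> I\<close> \<open>x' \<in> I\<close> by (auto dest: inj_onD)
  qed
qed (use interval nontrivial induced_mult_in induced_mult_assoc in auto)

lemma unary_reduction:
  assumes additive: "\<And>x y. x \<in> I \<Longrightarrow> y \<in> I \<Longrightarrow> \<Phi> (induced_mult x y) = \<Phi> x + \<Phi> y"
  shows "xs \<noteq> [] \<Longrightarrow> set xs \<subseteq> I \<Longrightarrow> \<exists>w\<in>I. F xs = F [w] \<and> \<Phi> w = sum_list (map \<Phi> xs)"
proof (induction xs)
  case (Cons x ys)
  show ?case
  proof (cases "ys = []")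
    case False
    then obtain w where w: "w \<in> I" "F ys = F [w]" "\<Phi> w = sum_list (map \<Phi> ys)"
      using Cons by auto
    have "F (x # ys) = F ([x] @ ys @ [])" by simp
    also have "\<dots> = F ([x] @ [w] @ [])" using Cons.prems w by (intro preassociativeD) auto
    also have "\<dots> = F [induced_mult x w]" using Cons.prems w by (simp add: unary_induced_mult)
    finally show ?thesis
      using Cons.prems w additive induced_mult_in by (intro bexI[of _ "induced_mult x w"]) auto
  qed (use Cons.prems in auto)
qed simp

theorem exists_representation:
  obtains J \<phi> \<psi> where "additive_representation I F J \<phi> \<psi>" "strict_mono_on I \<phi>"
proof -
  obtain \<Phi> :: "real \<Rightarrow> real" where \<Phi>: "continuous_on I \<Phi>" "strict_mono_on I \<Phi>"
    "\<And>x y. x \<in> I \<Longrightarrow> y \<in> I \<Longrightarrow> \<Phi> (induced_mult x y) = \<Phi> x + \<Phi> y"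
    using induced.exists_additive_generator by metis
  define \<psi> where "\<psi> t = F [inv_into I \<Phi> t]" for t
  have inj: "inj_on \<Phi> I" using \<Phi>(2) by (rule strict_mono_on_imp_inj_on)
  have "additive_interval (\<Phi> ` I)"
  proof (rule additive_intervalI)
    show "is_interval (\<Phi> ` I)"
      using interval \<Phi>(1) connected_continuous_image is_interval_connected_1 by blast
    obtain u v where "u \<in> I" "v \<in> I" "u \<noteq> v" using nontrivial by blast
    then show "\<exists>s\<in>\<Phi> ` I. \<exists>t\<in>\<Phi> ` I. s \<noteq> t" using inj_onD[OF inj] by blast
    show "\<forall>s\<in>\<Phi> ` I. \<forall>t\<in>\<Phi> ` I. s + t \<in> \<Phi> ` I"
      using image_eqI[of _ \<Phi>, OF \<Phi>(3)[symmetric] induced_mult_in] by blast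
  qed
  moreover have "continuous_on (\<Phi> ` I) \<psi>"
    unfolding \<psi>_def
    by (rule continuous_on_compose2[OF continuous_unary continuous_on_inv_into_interval[OF interval \<Phi>(1) inj]])
       (auto simp: inv_into_into)
  moreover have "strictly_monotonic_on (\<Phi> ` I) \<psi>"
    unfolding \<psi>_def
    using continuous_inj_on_interval_strict_mono_or_antimono[OF interval continuous_unary inj_unary]
    by (intro strictly_monotonic_on_compose[OF strict_mono_on_inv_into[OF \<Phi>(2)]])
       (auto simp: inv_into_into strictly_monotonic_on_def)
  moreover have "F xs = \<psi> (sum_list (map \<Phi> xs))" if "xs \<noteq> []" "set xs \<subseteq> I" for xs
    using unary_reduction[OF \<Phi>(3) that] inv_into_f_f[OF inj] unfolding \<psi>_def by metis
  ultimately have "additive_representation I F (\<Phi> ` I) \<Phi> \<psi>"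
    using \<Phi>(1,2) by unfold_locales (auto simp: strictly_monotonic_on_def)
  then show thesis using that \<Phi>(2) by blast
qed

end

theorem theorem5p2:
  fixes I :: "real set" and F :: "real list \<Rightarrow> real"
  assumes I_interval: "is_interval I"
    and I_nontrivial: "\<exists>x\<in>I. \<exists>y\<in>I. x \<noteq> y"
    and F_standard: "standard I F"
  defines "LHS \<equiv> preassociative I F \<and> unarily_quasi_range_idempotent I F
      \<and> continuous_on I (\<lambda>x. F [x]) \<and> inj_on (\<lambda>x. F [x]) I
      \<and> continuous_on (I \<times> I) (\<lambda>p. F [fst p, snd p])
      \<and> (\<forall>x\<in>I. inj_on (\<lambda>y. F [x, y]) I)
      \<and> (\<forall>y\<in>I. inj_on (\<lambda>x. F [x, y]) I)"
    and "Rep \<equiv> \<lambda>(J::real set) (\<phi>::real \<Rightarrow> real) (\<psi>::real \<Rightarrow> real).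
      ((\<exists>b. b \<le> 0 \<and> (J = {..<b} \<or> J = {..b}))
        \<or> (\<exists>a. 0 \<le> a \<and> (J = {a<..} \<or> J = {a..}))
        \<or> J = UNIV)
      \<and> continuous_on I \<phi> \<and> strictly_monotonic_on I \<phi> \<and> \<phi> ` I = J
      \<and> continuous_on J \<psi> \<and> strictly_monotonic_on J \<psi>
      \<and> (\<forall>xs. xs \<noteq> [] \<and> set xs \<subseteq> I \<longrightarrow> F xs = \<psi> (sum_list (map \<phi> xs)))"
  shows "(LHS \<longleftrightarrow> (\<exists>J \<phi> \<psi>. Rep J \<phi> \<psi>))
    \<and> (LHS \<longrightarrow>
        (\<forall>J \<phi> \<psi>. Rep J \<phi> \<psi> \<longrightarrow> (\<forall>t\<in>J. \<psi> t = F [inv_into I \<phi> t]))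
        \<and> ((\<not> (\<exists>m\<in>I. \<forall>x\<in>I. m \<le> x)) \<or> (\<not> (\<exists>M\<in>I. \<forall>x\<in>I. x \<le> M)))
        \<and> (\<exists>J \<phi> \<psi>. Rep J \<phi> \<psi> \<and> strict_mono_on I \<phi>))"
proof -
  have Rep_iff: "Rep J \<phi> \<psi> \<longleftrightarrow> additive_representation I F J \<phi> \<psi>" for J \<phi> \<psi>
    unfolding Rep_def additive_representation_def additive_interval_def by blast
  have forward: "\<exists>J \<phi> \<psi>. Rep J \<phi> \<psi> \<and> strict_mono_on I \<phi>" if LHS
  proof -
    interpret regular_preassociative I F
      using that I_interval I_nontrivial unfolding LHS_def by unfold_locales auto
    obtain J \<phi> \<psi> where "additive_representation I F J \<phi> \<psi>" "strict_mono_on I \<phi>"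
      by (rule exists_representation)
    then show ?thesis using Rep_iff by blast
  qed
  have properties: "LHS \<and> (\<forall>t\<in>J. \<psi> t = F [inv_into I \<phi> t])
      \<and> (\<not> (\<exists>m\<in>I. \<forall>x\<in>I. m \<le> x) \<or> \<not> (\<exists>M\<in>I. \<forall>x\<in>I. x \<le> M))" if "Rep J \<phi> \<psi>" for J \<phi> \<psi>
  proof -
    interpret additive_representation I F J \<phi> \<psi> using that Rep_iff by blast
    show ?thesis
      unfolding LHS_def
      using preassociative[OF F_standard] unarily_quasi_range_idempotent continuous_on_unary
        inj_on_unary continuous_on_binary inj_on_binary_left inj_on_binary_right
        \<psi>_eq not_compact_domain[OF I_interval]
      by blast
  qed
  show ?thesis using forward properties by blast
qed

end
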